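(* Provably in $\mathsf{GB}^{+\infty}$, and also provably in $\mathsf{GB}^{-\infty}$: the class defined by $\mathsf{T}_{\mathsf{Most}}(x)$ is an $F$-truth class over $(V,\in)$ for $F=\mathsf{Depth}_{\mathsf{Most}}$.
   Context: $\mathsf{GB}$ is Gödel–Bernays class theory; $\mathsf{GB}^{+\infty}=\mathsf{GB}$; $\mathsf{GB}^{-\infty}=\mathsf{GB}_{\mathsf{fin}}+\mathsf{TC}$, where $\mathsf{GB}_{\mathsf{fin}}$ replaces the axiom of infinity in $\mathsf{GB}$ by its negation and $\mathsf{TC}$ says every set has a transitive closure. $\omega$ is the class of finite ordinals. Reasoning in these theories: $V$ is the class of all sets; $c_a$ is a constant naming the set $a$; $\mathcal{L}^+_{\mathsf{ZF}}$-sentences are codes of $\varphi(c_{a_1},\dots,c_{a_n})$ with $\varphi$ an internal $\mathcal{L}_{\mathsf{ZF}}$-formula. $\mathsf{depth}(\varphi)$ is the length of the longest path in the parsing tree of $\varphi$ (the depth of $\varphi(c_{a_1},\dots)$ is that of $\varphi$); $\mathsf{Depth}_k$ is the set of $\mathcal{L}_{\mathsf{ZF}}$-formulas of depth $\le k$. For a collection $F$ of $\mathcal{L}_{\mathsf{ZF}}$-formulas closed under immediate subformulas, with $\mathsf{FSent}$ the sentences obtained by substituting constants $c_a$ for the free variables of formulas in $F$, a class $T$ is an $F$-truth class over $(V,\in)$ if: (1) $T\subseteq\mathsf{FSent}$; (2) $\ulcorner c_a=c_b\urcorner\in T\leftrightarrow a=b$ and $\ulcorner c_a\in c_b\urcorner\in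 T\leftrightarrow a\in b$; (3) for $\neg\psi\in\mathsf{FSent}$: $\neg\psi\in T\leftrightarrow\psi\notin T$; (4) for $\psi_1\vee\psi_2\in\mathsf{FSent}$: $(\psi_1\vee\psi_2)\in T\leftrightarrow(\psi_1\in T\vee\psi_2\in T)$; (5) for $\exists v\,\psi(v)\in\mathsf{FSent}$: $\exists v\,\psi(v)\in T\leftrightarrow\exists x\,\psi(c_x)\in T$. $\mathsf{C}_{\mathsf{Most}}$ is the class of $k\in\omega$ for which some class is a $\mathsf{Depth}_k$-truth class over $(V,\in)$; $\mathsf{Depth}_{\mathsf{Most}}$ is the class of $\mathcal{L}_{\mathsf{ZF}}$-formulas $\varphi$ with $\mathsf{depth}(\varphi)\in\mathsf{C}_{\mathsf{Most}}$. $\mathsf{T}_{\mathsf{Most}}(x)$ expresses: $x$ is (the code of) an $\mathcal{L}^+_{\mathsf{ZF}}$-sentence $\varphi(c_{a_1},\dots,c_{a_n})$ and there exist $p\ge\mathsf{depth}(\varphi)$ and a class $T$ such that $\varphi(c_{a_1},\dots,c_{a_n})\in T$ and $T$ is a $\mathsf{Depth}_p$-truth class over $(V,\in)$. *)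

theory Defs
  imports Main
begin

text \<open>Semantic rendering of provability in GB-style class theories: a two-sorted
  (Henkin) model is given by a membership relation e on the type 'a of sets and
  a collection Cl of classes (HOL sets of sets).  All syntax (codes of formulas,
  depth, substitution, internal natural numbers) is coded INSIDE the model.\<close>

definition m_empty :: "('a \<Rightarrow> 'a \<Rightarrow> bool) \<Rightarrow> 'a \<Rightarrow> bool" where
  "m_empty e x \<equiv> \<forall>z. \<not> e z x"

definition m_upair :: "('a \<Rightarrow> 'a \<Rightarrow> bool) \<Rightarrow> 'a \<Rightarrow> 'a \<Rightarrow> 'a \<Rightarrow> bool" where
  "m_upair e p a b \<equiv> \<forall>z. e z p \<longleftrightarrow> z = a \<or> z = b"

definition m_pair :: "('a \<Rightarrow> 'a \<Rightarrow> bool) \<Rightarrow> 'a \<Rightarrow> 'a \<Rightarrow> 'a \<Rightarrow> bool" where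
  "m_pair e p a b \<equiv> \<exists>u w. m_upair e u a a \<and> m_upair e w a b \<and> m_upair e p u w"

definition m_succ :: "('a \<Rightarrow> 'a \<Rightarrow> bool) \<Rightarrow> 'a \<Rightarrow> 'a \<Rightarrow> bool" where
  "m_succ e y x \<equiv> \<forall>z. e z y \<longleftrightarrow> e z x \<or> z = x"

definition m_union2 :: "('a \<Rightarrow> 'a \<Rightarrow> bool) \<Rightarrow> 'a \<Rightarrow> 'a \<Rightarrow> 'a \<Rightarrow> bool" where
  "m_union2 e u x y \<equiv> \<forall>z. e z u \<longleftrightarrow> e z x \<or> e z y"

definition m_transitive :: "('a \<Rightarrow> 'a \<Rightarrow> bool) \<Rightarrow> 'a \<Rightarrow> bool" where
  "m_transitive e x \<equiv> \<forall>y z. e z y \<and> e y x \<longrightarrow> e z x"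

definition m_ord :: "('a \<Rightarrow> 'a \<Rightarrow> bool) \<Rightarrow> 'a \<Rightarrow> bool" where
  "m_ord e x \<equiv> m_transitive e x \<and> (\<forall>y. e y x \<longrightarrow> m_transitive e y)"

definition m_nat :: "('a \<Rightarrow> 'a \<Rightarrow> bool) \<Rightarrow> 'a \<Rightarrow> bool" where
  "m_nat e n \<equiv> m_ord e n \<and>
     (\<forall>m. (m = n \<or> e m n) \<longrightarrow> m_empty e m \<or> (\<exists>k. m_succ e m k))"

definition m_le :: "('a \<Rightarrow> 'a \<Rightarrow> bool) \<Rightarrow> 'a \<Rightarrow> 'a \<Rightarrow> bool" where
  "m_le e m n \<equiv> m = n \<or> e m n"

text \<open>Standard numerals (used only as syntactic tags).\<close>
fun m_num :: "('a \<Rightarrow> 'a \<Rightarrow> bool) \<Rightarrow> nat \<Rightarrow> 'a \<Rightarrow> bool" where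
  "m_num e 0 x = m_empty e x"
| "m_num e (Suc k) x = (\<exists>y. m_num e k y \<and> m_succ e x y)"

definition m_tag :: "('a \<Rightarrow> 'a \<Rightarrow> bool) \<Rightarrow> nat \<Rightarrow> 'a \<Rightarrow> 'a \<Rightarrow> bool" where
  "m_tag e k p a \<equiv> \<exists>t. m_num e k t \<and> m_pair e p t a"

definition m_tag2 :: "('a \<Rightarrow> 'a \<Rightarrow> bool) \<Rightarrow> nat \<Rightarrow> 'a \<Rightarrow> 'a \<Rightarrow> 'a \<Rightarrow> bool" where
  "m_tag2 e k p a b \<equiv> \<exists>q. m_pair e q a b \<and> m_tag e k p q"

text \<open>variable v_i: <0,i>; constant c_a: <1,a>; (t1 = t2): <2,<t1,t2>>;
  (t1 \<in> t2): <3,<t1,t2>>; neg phi: <4,phi>; (phi or psi): <5,<phi,psi>>;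
  (exists v_i phi): <6,<i,phi>>.\<close>

definition isVar :: "('a \<Rightarrow> 'a \<Rightarrow> bool) \<Rightarrow> 'a \<Rightarrow> 'a \<Rightarrow> bool" where
  "isVar e t i \<equiv> m_nat e i \<and> m_tag e 0 t i"

definition isConst :: "('a \<Rightarrow> 'a \<Rightarrow> bool) \<Rightarrow> 'a \<Rightarrow> 'a \<Rightarrow> bool" where
  "isConst e t a \<equiv> m_tag e 1 t a"

definition isTerm :: "('a \<Rightarrow> 'a \<Rightarrow> bool) \<Rightarrow> 'a \<Rightarrow> bool" where
  "isTerm e t \<equiv> (\<exists>i. isVar e t i) \<or> (\<exists>a. isConst e t a)"

definition isEqF :: "('a \<Rightarrow> 'a \<Rightarrow> bool) \<Rightarrow> 'a \<Rightarrow> 'a \<Rightarrow> 'a \<Rightarrow> bool" where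
  "isEqF e p t1 t2 \<equiv> isTerm e t1 \<and> isTerm e t2 \<and> m_tag2 e 2 p t1 t2"

definition isMemF :: "('a \<Rightarrow> 'a \<Rightarrow> bool) \<Rightarrow> 'a \<Rightarrow> 'a \<Rightarrow> 'a \<Rightarrow> bool" where
  "isMemF e p t1 t2 \<equiv> isTerm e t1 \<and> isTerm e t2 \<and> m_tag2 e 3 p t1 t2"

definition isNeg :: "('a \<Rightarrow> 'a \<Rightarrow> bool) \<Rightarrow> 'a \<Rightarrow> 'a \<Rightarrow> bool" where
  "isNeg e p \<phi> \<equiv> m_tag e 4 p \<phi>"

definition isOr :: "('a \<Rightarrow> 'a \<Rightarrow> bool) \<Rightarrow> 'a \<Rightarrow> 'a \<Rightarrow> 'a \<Rightarrow> bool" where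
  "isOr e p \<phi> \<psi> \<equiv> m_tag2 e 5 p \<phi> \<psi>"

definition isEx :: "('a \<Rightarrow> 'a \<Rightarrow> bool) \<Rightarrow> 'a \<Rightarrow> 'a \<Rightarrow> 'a \<Rightarrow> bool" where
  "isEx e p i \<phi> \<equiv> m_nat e i \<and> m_tag2 e 6 p i \<phi>"

definition form_closed ::
  "('a \<Rightarrow> 'a \<Rightarrow> bool) \<Rightarrow> ('a \<Rightarrow> bool) \<Rightarrow> 'a \<Rightarrow> bool" where
  "form_closed e tm S \<equiv> \<forall>\<chi>. e \<chi> S \<longrightarrow>
      (\<exists>t1 t2. (isEqF e \<chi> t1 t2 \<or> isMemF e \<chi> t1 t2) \<and> tm t1 \<and> tm t2)
    \<or> (\<exists>\<theta>. isNeg e \<chi> \<theta> \<and> e \<theta> S)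
    \<or> (\<exists>\<theta>1 \<theta>2. isOr e \<chi> \<theta>1 \<theta>2 \<and> e \<theta>1 S \<and> e \<theta>2 S)
    \<or> (\<exists>i \<theta>. isEx e \<chi> i \<theta> \<and> e \<theta> S)"

definition LPformula :: "('a \<Rightarrow> 'a \<Rightarrow> bool) \<Rightarrow> 'a \<Rightarrow> bool" where
  "LPformula e x \<equiv> \<exists>S. e x S \<and> form_closed e (isTerm e) S"

definition LZFformula :: "('a \<Rightarrow> 'a \<Rightarrow> bool) \<Rightarrow> 'a \<Rightarrow> bool" where
  "LZFformula e x \<equiv> \<exists>S. e x S \<and> form_closed e (\<lambda>t. \<exists>i. isVar e t i) S"

definition inRel2 :: "('a \<Rightarrow> 'a \<Rightarrow> bool) \<Rightarrow> 'a \<Rightarrow> 'a \<Rightarrow> 'a \<Rightarrow> bool" where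
  "inRel2 e R a b \<equiv> \<exists>q. m_pair e q a b \<and> e q R"

text \<open>Depth = length of the longest path in the parsing tree (atoms: 0).\<close>
definition depth_closed :: "('a \<Rightarrow> 'a \<Rightarrow> bool) \<Rightarrow> 'a \<Rightarrow> bool" where
  "depth_closed e R \<equiv> \<forall>q. e q R \<longrightarrow> (\<exists>\<chi> d. m_pair e q \<chi> d \<and> m_nat e d \<and>
      ((\<exists>t1 t2. (isEqF e \<chi> t1 t2 \<or> isMemF e \<chi> t1 t2)) \<and> m_empty e d
     \<or> (\<exists>\<theta> d'. isNeg e \<chi> \<theta> \<and> inRel2 e R \<theta> d' \<and> m_succ e d d')
     \<or> (\<exists>\<theta>1 \<theta>2 d1 d2 u. isOr e \<chi> \<theta>1 \<theta>2 \<and> inRel2 e R \<theta>1 d1 \<and> inRel2 e R \<theta>2 d2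
            \<and> m_union2 e u d1 d2 \<and> m_succ e d u)
     \<or> (\<exists>i \<theta> d'. isEx e \<chi> i \<theta> \<and> inRel2 e R \<theta> d' \<and> m_succ e d d')))"

definition hasDepth :: "('a \<Rightarrow> 'a \<Rightarrow> bool) \<Rightarrow> 'a \<Rightarrow> 'a \<Rightarrow> bool" where
  "hasDepth e x d \<equiv> \<exists>R. depth_closed e R \<and> inRel2 e R x d"

definition isAssign :: "('a \<Rightarrow> 'a \<Rightarrow> bool) \<Rightarrow> 'a \<Rightarrow> bool" where
  "isAssign e g \<equiv> (\<forall>p. e p g \<longrightarrow> (\<exists>i a. m_nat e i \<and> m_pair e p i a)) \<and>
     (\<forall>i a b p q. m_pair e p i a \<and> m_pair e q i b \<and> e p g \<and> e q g \<longrightarrow> a = b)"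

definition isSingAssign :: "('a \<Rightarrow> 'a \<Rightarrow> bool) \<Rightarrow> 'a \<Rightarrow> 'a \<Rightarrow> 'a \<Rightarrow> bool" where
  "isSingAssign e g i a \<equiv> \<forall>p. e p g \<longleftrightarrow> m_pair e p i a"

definition m_remove :: "('a \<Rightarrow> 'a \<Rightarrow> bool) \<Rightarrow> 'a \<Rightarrow> 'a \<Rightarrow> 'a \<Rightarrow> bool" where
  "m_remove e g' g j \<equiv> \<forall>p. e p g' \<longleftrightarrow> e p g \<and> \<not> (\<exists>b. m_pair e p j b)"

definition tsubst :: "('a \<Rightarrow> 'a \<Rightarrow> bool) \<Rightarrow> 'a \<Rightarrow> 'a \<Rightarrow> 'a \<Rightarrow> bool" where
  "tsubst e g t t' \<equiv>
     (\<exists>i a p. isVar e t i \<and> m_pair e p i a \<and> e p g \<and> isConst e t' a)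
   \<or> (isTerm e t \<and> \<not> (\<exists>i a p. isVar e t i \<and> m_pair e p i a \<and> e p g) \<and> t' = t)"

definition m_triple :: "('a \<Rightarrow> 'a \<Rightarrow> bool) \<Rightarrow> 'a \<Rightarrow> 'a \<Rightarrow> 'a \<Rightarrow> 'a \<Rightarrow> bool" where
  "m_triple e q g x y \<equiv> \<exists>r. m_pair e r x y \<and> m_pair e q g r"

definition inRel3 :: "('a \<Rightarrow> 'a \<Rightarrow> bool) \<Rightarrow> 'a \<Rightarrow> 'a \<Rightarrow> 'a \<Rightarrow> 'a \<Rightarrow> bool" where
  "inRel3 e R g x y \<equiv> \<exists>q. m_triple e q g x y \<and> e q R"

text \<open>Simultaneous substitution of constants c_(g i) for the free variables v_i
  (i in dom g).\<close>
definition subst_closed :: "('a \<Rightarrow> 'a \<Rightarrow> bool) \<Rightarrow> 'a \<Rightarrow> bool" where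
  "subst_closed e R \<equiv> \<forall>q. e q R \<longrightarrow> (\<exists>g \<chi> \<chi>'. m_triple e q g \<chi> \<chi>' \<and> isAssign e g \<and>
      ((\<exists>t1 t2 s1 s2. isEqF e \<chi> t1 t2 \<and> tsubst e g t1 s1 \<and> tsubst e g t2 s2 \<and> isEqF e \<chi>' s1 s2)
     \<or> (\<exists>t1 t2 s1 s2. isMemF e \<chi> t1 t2 \<and> tsubst e g t1 s1 \<and> tsubst e g t2 s2 \<and> isMemF e \<chi>' s1 s2)
     \<or> (\<exists>\<theta> \<theta>'. isNeg e \<chi> \<theta> \<and> isNeg e \<chi>' \<theta>' \<and> inRel3 e R g \<theta> \<theta>')
     \<or> (\<exists>\<theta>1 \<theta>2 \<theta>1' \<theta>2'. isOr e \<chi> \<theta>1 \<theta>2 \<and> isOr e \<chi>' \<theta>1' \<theta>2'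
            \<and> inRel3 e R g \<theta>1 \<theta>1' \<and> inRel3 e R g \<theta>2 \<theta>2')
     \<or> (\<exists>i \<theta> \<theta>' g'. isEx e \<chi> i \<theta> \<and> isEx e \<chi>' i \<theta>' \<and> m_remove e g' g i
            \<and> inRel3 e R g' \<theta> \<theta>')))"

definition ssubst :: "('a \<Rightarrow> 'a \<Rightarrow> bool) \<Rightarrow> 'a \<Rightarrow> 'a \<Rightarrow> 'a \<Rightarrow> bool" where
  "ssubst e g x y \<equiv> \<exists>R. subst_closed e R \<and> inRel3 e R g x y"

definition notfree_closed :: "('a \<Rightarrow> 'a \<Rightarrow> bool) \<Rightarrow> 'a \<Rightarrow> 'a \<Rightarrow> bool" where
  "notfree_closed e i N \<equiv> \<forall>\<chi>. e \<chi> N \<longrightarrow>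
      (\<exists>t1 t2. (isEqF e \<chi> t1 t2 \<or> isMemF e \<chi> t1 t2) \<and> \<not> isVar e t1 i \<and> \<not> isVar e t2 i)
    \<or> (\<exists>\<theta>. isNeg e \<chi> \<theta> \<and> e \<theta> N)
    \<or> (\<exists>\<theta>1 \<theta>2. isOr e \<chi> \<theta>1 \<theta>2 \<and> e \<theta>1 N \<and> e \<theta>2 N)
    \<or> (\<exists>j \<theta>. isEx e \<chi> j \<theta> \<and> ((j = i \<and> LPformula e \<theta>) \<or> e \<theta> N))"

definition notFree :: "('a \<Rightarrow> 'a \<Rightarrow> bool) \<Rightarrow> 'a \<Rightarrow> 'a \<Rightarrow> bool" where
  "notFree e i x \<equiv> \<exists>N. e x N \<and> notfree_closed e i N"

definition LPclosed :: "('a \<Rightarrow> 'a \<Rightarrow> bool) \<Rightarrow> 'a \<Rightarrow> bool" where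
  "LPclosed e x \<equiv> LPformula e x \<and> (\<forall>i. m_nat e i \<longrightarrow> notFree e i x)"

definition FSent :: "('a \<Rightarrow> 'a \<Rightarrow> bool) \<Rightarrow> 'a set \<Rightarrow> 'a set" where
  "FSent e F \<equiv> {x. LPclosed e x \<and>
     (\<exists>\<phi> g. \<phi> \<in> F \<and> LZFformula e \<phi> \<and> isAssign e g \<and> ssubst e g \<phi> x)}"

definition LPsentence :: "('a \<Rightarrow> 'a \<Rightarrow> bool) \<Rightarrow> 'a set" where
  "LPsentence e \<equiv> FSent e {\<phi>. LZFformula e \<phi>}"

definition truth_class :: "('a \<Rightarrow> 'a \<Rightarrow> bool) \<Rightarrow> 'a set \<Rightarrow> 'a set \<Rightarrow> bool" where
  "truth_class e F T \<equiv>
     T \<subseteq> FSent e F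
   \<and> (\<forall>a b p ta tb. isConst e ta a \<and> isConst e tb b \<and> isEqF e p ta tb \<longrightarrow> (p \<in> T \<longleftrightarrow> a = b))
   \<and> (\<forall>a b p ta tb. isConst e ta a \<and> isConst e tb b \<and> isMemF e p ta tb \<longrightarrow> (p \<in> T \<longleftrightarrow> e a b))
   \<and> (\<forall>x \<psi>. x \<in> FSent e F \<and> isNeg e x \<psi> \<longrightarrow> (x \<in> T \<longleftrightarrow> \<psi> \<notin> T))
   \<and> (\<forall>x \<psi>1 \<psi>2. x \<in> FSent e F \<and> isOr e x \<psi>1 \<psi>2 \<longrightarrow> (x \<in> T \<longleftrightarrow> \<psi>1 \<in> T \<or> \<psi>2 \<in> T))
   \<and> (\<forall>x i \<psi>. x \<in> FSent e F \<and> isEx e x i \<psi> \<longrightarrow>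
        (x \<in> T \<longleftrightarrow> (\<exists>a g y. isSingAssign e g i a \<and> ssubst e g \<psi> y \<and> y \<in> T)))"

definition DepthF :: "('a \<Rightarrow> 'a \<Rightarrow> bool) \<Rightarrow> 'a \<Rightarrow> 'a set" where
  "DepthF e k \<equiv> {\<phi>. LZFformula e \<phi> \<and> (\<exists>d. hasDepth e \<phi> d \<and> m_le e d k)}"

definition C_Most :: "('a \<Rightarrow> 'a \<Rightarrow> bool) \<Rightarrow> 'a set set \<Rightarrow> 'a set" where
  "C_Most e Cl \<equiv> {k. m_nat e k \<and> (\<exists>T\<in>Cl. truth_class e (DepthF e k) T)}"

definition Depth_Most :: "('a \<Rightarrow> 'a \<Rightarrow> bool) \<Rightarrow> 'a set set \<Rightarrow> 'a set" where
  "Depth_Most e Cl \<equiv> {\<phi>. LZFformula e \<phi> \<and> (\<exists>d. hasDepth e \<phi> d \<and> d \<in> C_Most e Cl)}"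

definition T_Most :: "('a \<Rightarrow> 'a \<Rightarrow> bool) \<Rightarrow> 'a set set \<Rightarrow> 'a \<Rightarrow> bool" where
  "T_Most e Cl x \<equiv> x \<in> LPsentence e \<and>
     (\<exists>\<phi> g d p T. LZFformula e \<phi> \<and> isAssign e g \<and> ssubst e g \<phi> x \<and>
        hasDepth e \<phi> d \<and> m_nat e p \<and> m_le e d p \<and>
        T \<in> Cl \<and> x \<in> T \<and> truth_class e (DepthF e p) T)"

text \<open>Formulas of the class language with set variables (nat-indexed) and
  class parameters; only set quantifiers (predicative comprehension).\<close>
datatype cform = CMem nat nat | CEq nat nat | CIn nat nat | CNeg cform
  | COr cform cform | CEx nat cform

fun csat :: "('a \<Rightarrow> 'a \<Rightarrow> bool) \<Rightarrow> (nat \<Rightarrow> 'a) \<Rightarrow> (nat \<Rightarrow> 'a set) \<Rightarrow> cform \<Rightarrow> bool" where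
  "csat e s c (CMem i j) = e (s i) (s j)"
| "csat e s c (CEq i j) = (s i = s j)"
| "csat e s c (CIn i k) = (s i \<in> c k)"
| "csat e s c (CNeg \<phi>) = (\<not> csat e s c \<phi>)"
| "csat e s c (COr \<phi> \<psi>) = (csat e s c \<phi> \<or> csat e s c \<psi>)"
| "csat e s c (CEx i \<phi>) = (\<exists>x. csat e (s(i := x)) c \<phi>)"

definition GB_common :: "('a \<Rightarrow> 'a \<Rightarrow> bool) \<Rightarrow> 'a set set \<Rightarrow> bool" where
  "GB_common e Cl \<equiv>
     (\<forall>x y. (\<forall>z. e z x \<longleftrightarrow> e z y) \<longrightarrow> x = y)
   \<and> (\<forall>x. {z. e z x} \<in> Cl)
   \<and> (\<forall>\<phi> s c. (\<forall>k. c k \<in> Cl) \<longrightarrow> {x. csat e (s(0 := x)) c \<phi>} \<in> Cl)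
   \<and> (\<forall>a b. \<exists>p. m_upair e p a b)
   \<and> (\<forall>x. \<exists>u. \<forall>z. e z u \<longleftrightarrow> (\<exists>y. e y x \<and> e z y))
   \<and> (\<forall>x. \<exists>p. \<forall>z. e z p \<longleftrightarrow> (\<forall>w. e w z \<longrightarrow> e w x))
   \<and> (\<forall>A\<in>Cl. \<forall>x. \<exists>y. \<forall>z. e z y \<longleftrightarrow> e z x \<and> z \<in> A)
   \<and> (\<forall>A\<in>Cl. (\<forall>x y y' p p'. m_pair e p x y \<and> m_pair e p' x y' \<and> p \<in> A \<and> p' \<in> A \<longrightarrow> y = y')
        \<longrightarrow> (\<forall>u. \<exists>w. \<forall>y. e y w \<longleftrightarrow> (\<exists>x p. e x u \<and> m_pair e p x y \<and> p \<in> A)))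
   \<and> (\<forall>x. (\<exists>y. e y x) \<longrightarrow> (\<exists>y. e y x \<and> \<not> (\<exists>z. e z y \<and> e z x)))"

definition m_Infinity :: "('a \<Rightarrow> 'a \<Rightarrow> bool) \<Rightarrow> bool" where
  "m_Infinity e \<equiv> \<exists>x. (\<exists>z. m_empty e z \<and> e z x) \<and>
                       (\<forall>y. e y x \<longrightarrow> (\<exists>s. m_succ e s y \<and> e s x))"

definition m_TC :: "('a \<Rightarrow> 'a \<Rightarrow> bool) \<Rightarrow> bool" where
  "m_TC e \<equiv> \<forall>x. \<exists>t. m_transitive e t \<and> (\<forall>z. e z x \<longrightarrow> e z t) \<and>
     (\<forall>t'. m_transitive e t' \<and> (\<forall>z. e z x \<longrightarrow> e z t') \<longrightarrow> (\<forall>z. e z t \<longrightarrow> e z t'))"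

definition GB_plus_inf :: "('a \<Rightarrow> 'a \<Rightarrow> bool) \<Rightarrow> 'a set set \<Rightarrow> bool" where
  "GB_plus_inf e Cl \<equiv> GB_common e Cl \<and> m_Infinity e"

definition GB_minus_inf :: "('a \<Rightarrow> 'a \<Rightarrow> bool) \<Rightarrow> 'a set set \<Rightarrow> bool" where
  "GB_minus_inf e Cl \<equiv> GB_common e Cl \<and> \<not> m_Infinity e \<and> m_TC e"

end

theory Submission
  imports Defs
begin

text \<open>
  Call a class T a partial truth class of depth p if it is a DepthF p-truth class.  Two
  partial truth classes T and T', of depths p and q, agree on every sentence that both
  cover.  This is proved by induction on the depth of the sentence: the set of depths at
  which T and T' agree is a class by predicative comprehension with T and T' as parameters,
  so foundation applies to it, and the Tarski clauses propagate agreement from the immediate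
  subsentences.  For the witnesses of an existential sentence this uses that substituting a
  constant into an instance of the matrix gives again an instance of the matrix (compose the
  two assignments), so the witnesses have smaller depth.

  Hence T_Most, the union of all partial truth classes, coincides with each of them on the
  sentences it covers, and every Tarski clause for T_Most at a sentence of Depth_Most is
  inherited from one partial truth class covering it.  Restricting a partial truth class to
  a smaller depth by separation shows that T_Most only contains sentences in Depth_Most, and
  the true atomic sentences form a partial truth class of depth 0, which decides the atomic
  clauses.
\<close>

subsection \<open>Predicative definability\<close>

fun rename_params :: "(nat \<Rightarrow> nat) \<Rightarrow> cform \<Rightarrow> cform" where
  "rename_params r (CMem i j) = CMem i j"
| "rename_params r (CEq i j) = CEq i j"
| "rename_params r (CIn i k) = CIn i (r k)"
| "rename_params r (CNeg \<phi>) = CNeg (rename_params r \<phi>)"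
| "rename_params r (COr \<phi> \<psi>) = COr (rename_params r \<phi>) (rename_params r \<psi>)"
| "rename_params r (CEx i \<phi>) = CEx i (rename_params r \<phi>)"

lemma csat_rename_params: "csat e s c (rename_params r \<phi>) = csat e s (c \<circ> r) \<phi>"
  by (induction \<phi> arbitrary: s) auto

text \<open>A predicate P on variable assignments is definable if, however its variables are
  renamed into a finite range, it is expressed by a class formula with parameters from
  Cl.  The finite range leaves a fresh variable for the existential quantifier; the
  premise Cl \<noteq> {} supplies dummy parameters.\<close>
definition definable :: "('a \<Rightarrow> 'a \<Rightarrow> bool) \<Rightarrow> 'a set set \<Rightarrow> ((nat \<Rightarrow> 'a) \<Rightarrow> bool) \<Rightarrow> bool" where
  "definable e Cl P \<longleftrightarrow> Cl \<noteq> {} \<longrightarrow> (\<forall>f (B::nat). (\<forall>n. f n < B) \<longrightarrow>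
     (\<exists>c \<phi>. range c \<subseteq> Cl \<and> (\<forall>s. csat e s c \<phi> = P (s \<circ> f))))"

lemma definableI:
  assumes "\<And>f B A. A \<in> Cl \<Longrightarrow> (\<forall>n. f n < (B::nat)) \<Longrightarrow>
     \<exists>c \<phi>. range c \<subseteq> Cl \<and> (\<forall>s. csat e s c \<phi> = P (s \<circ> f))"
  shows "definable e Cl P"
  using assms unfolding definable_def by blast

lemma definableD:
  assumes "definable e Cl P" "A \<in> Cl" "\<forall>n. f n < (B::nat)"
  shows "\<exists>c \<phi>. range c \<subseteq> Cl \<and> (\<forall>s. csat e s c \<phi> = P (s \<circ> f))"
  using assms unfolding definable_def by blast

lemma definable_mem: "definable e Cl (\<lambda>s. e (s i) (s j))"
proof (rule definableI)
  fix f :: "nat \<Rightarrow> nat" and A assume "A \<in> Cl"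
  then show "\<exists>c \<phi>. range c \<subseteq> Cl \<and> (\<forall>s. csat e s c \<phi> = e ((s \<circ> f) i) ((s \<circ> f) j))"
    by (intro exI[of _ "\<lambda>_. A"] exI[of _ "CMem (f i) (f j)"]) auto
qed

lemma definable_eq: "definable e Cl (\<lambda>s. s i = s j)"
proof (rule definableI)
  fix f :: "nat \<Rightarrow> nat" and A assume "A \<in> Cl"
  then show "\<exists>c \<phi>. range c \<subseteq> Cl \<and> (\<forall>s. csat e s c \<phi> = ((s \<circ> f) i = (s \<circ> f) j))"
    by (intro exI[of _ "\<lambda>_. A"] exI[of _ "CEq (f i) (f j)"]) auto
qed

lemma definable_class_mem: "A \<in> Cl \<Longrightarrow> definable e Cl (\<lambda>s. s i \<in> A)"
proof (rule definableI)
  fix f :: "nat \<Rightarrow> nat" assume "A \<in> Cl"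
  then show "\<exists>c \<phi>. range c \<subseteq> Cl \<and> (\<forall>s. csat e s c \<phi> = ((s \<circ> f) i \<in> A))"
    by (intro exI[of _ "\<lambda>_. A"] exI[of _ "CIn (f i) 0"]) auto
qed

lemma definable_not: "definable e Cl P \<Longrightarrow> definable e Cl (\<lambda>s. \<not> P s)"
proof (rule definableI)
  fix f :: "nat \<Rightarrow> nat" and B A
  assume "definable e Cl P" "A \<in> Cl" "\<forall>n. f n < B"
  then obtain c \<phi> where "range c \<subseteq> Cl" "\<And>s. csat e s c \<phi> = P (s \<circ> f)"
    using definableD by blast
  then show "\<exists>c \<phi>. range c \<subseteq> Cl \<and> (\<forall>s. csat e s c \<phi> = (\<not> P (s \<circ> f)))"
    by (intro exI[of _ c] exI[of _ "CNeg \<phi>"]) auto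
qed

lemma definable_disj: "definable e Cl P \<Longrightarrow> definable e Cl Q \<Longrightarrow> definable e Cl (\<lambda>s. P s \<or> Q s)"
proof (rule definableI)
  fix f :: "nat \<Rightarrow> nat" and B A
  assume P: "definable e Cl P" and Q: "definable e Cl Q" and A: "A \<in> Cl" "\<forall>n. f n < B"
  obtain c1 \<phi>1 where c1: "range c1 \<subseteq> Cl" "\<And>s. csat e s c1 \<phi>1 = P (s \<circ> f)"
    using definableD[OF P A] by blast
  obtain c2 \<phi>2 where c2: "range c2 \<subseteq> Cl" "\<And>s. csat e s c2 \<phi>2 = Q (s \<circ> f)"
    using definableD[OF Q A] by blast
  define c where "c = (\<lambda>k::nat. if even k then c1 (k div 2) else c2 (k div 2))"
  have "c \<circ> (\<lambda>k. 2 * k) = c1" "c \<circ> (\<lambda>k. Suc (2 * k)) = c2"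
    unfolding c_def by auto
  then have "csat e s c (COr (rename_params (\<lambda>k. 2 * k) \<phi>1) (rename_params (\<lambda>k. Suc (2 * k)) \<phi>2))
      = (P (s \<circ> f) \<or> Q (s \<circ> f))" for s
    using c1 c2 by (simp add: csat_rename_params)
  moreover have "range c \<subseteq> Cl" unfolding c_def using c1 c2 by auto
  ultimately show "\<exists>c \<phi>. range c \<subseteq> Cl \<and> (\<forall>s. csat e s c \<phi> = (P (s \<circ> f) \<or> Q (s \<circ> f)))"
    by blast
qed

text \<open>In the premise the bound variable is position 0 of the assignment; in the class
  formula it becomes the fresh index B.\<close>
lemma definable_ex:
  "definable e Cl (\<lambda>s. P (s 0) (\<lambda>n. s (Suc n))) \<Longrightarrow> definable e Cl (\<lambda>s. \<exists>x. P x s)"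
proof (rule definableI)
  fix f :: "nat \<Rightarrow> nat" and B A
  assume P: "definable e Cl (\<lambda>s. P (s 0) (\<lambda>n. s (Suc n)))" and A: "A \<in> Cl" "\<forall>n. f n < B"
  have "\<forall>n. case_nat B f n < Suc B" using A(2) by (auto split: nat.split simp: less_Suc_eq)
  from definableD[OF P A(1) this]
  have "\<exists>c \<phi>. range c \<subseteq> Cl \<and> (\<forall>s. csat e s c \<phi> = P (s B) (\<lambda>n. s (f n)))"
    by (simp add: comp_def)
  then obtain c \<phi> where c: "range c \<subseteq> Cl" "\<And>s. csat e s c \<phi> = P (s B) (\<lambda>n. s (f n))"
    by blast
  have "csat e s c (CEx B \<phi>) = (\<exists>x. P x (s \<circ> f))" for s
  proof -
    have "(\<lambda>n. (s(B := x)) (f n)) = (\<lambda>n. s (f n))" for x using A(2) by (auto intro!: ext)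
    then show ?thesis using c(2) by (simp add: comp_def)
  qed
  then show "\<exists>c \<phi>. range c \<subseteq> Cl \<and> (\<forall>s. csat e s c \<phi> = (\<exists>x. P x (s \<circ> f)))"
    using c(1) by blast
qed

lemma definable_conj: "definable e Cl P \<Longrightarrow> definable e Cl Q \<Longrightarrow> definable e Cl (\<lambda>s. P s \<and> Q s)"
  using definable_not[OF definable_disj[OF definable_not definable_not]] by simp

lemma definable_imp: "definable e Cl P \<Longrightarrow> definable e Cl Q \<Longrightarrow> definable e Cl (\<lambda>s. P s \<longrightarrow> Q s)"
  using definable_disj[OF definable_not] by simp

lemma definable_iff: "definable e Cl P \<Longrightarrow> definable e Cl Q \<Longrightarrow> definable e Cl (\<lambda>s. P s \<longleftrightarrow> Q s)"
  using definable_conj[OF definable_imp definable_imp] by (simp add: iff_conv_conj_imp)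

lemma definable_all:
  "definable e Cl (\<lambda>s. P (s 0) (\<lambda>n. s (Suc n))) \<Longrightarrow> definable e Cl (\<lambda>s. \<forall>x. P x s)"
  using definable_not[OF definable_ex[of e Cl "\<lambda>x s. \<not> P x s", OF definable_not]] by simp

lemma definable_True: "definable e Cl (\<lambda>s. True)"
  using definable_eq[of e Cl 0 0] by simp

lemma definable_False: "definable e Cl (\<lambda>s. False)"
  using definable_not[OF definable_True] by simp

lemmas definable_logic = definable_all definable_ex definable_conj definable_disj definable_imp
  definable_iff definable_not definable_mem definable_eq definable_class_mem definable_True
  definable_False

lemma GB_common_set_class: "GB_common e Cl \<Longrightarrow> {z. e z y} \<in> Cl"
  unfolding GB_common_def by (elim conjE) (rule spec)

lemma GB_common_comprehension:
  assumes "GB_common e Cl" "range c \<subseteq> Cl"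
  shows "{x. csat e (s(0 := x)) c \<phi>} \<in> Cl"
proof -
  have "\<forall>\<phi> s c. (\<forall>k. c k \<in> Cl) \<longrightarrow> {x. csat e (s(0 := x)) c \<phi>} \<in> Cl"
    using assms(1) unfolding GB_common_def by (elim conjE)
  then show ?thesis using assms(2) by blast
qed

lemma definable_class:
  assumes gb: "GB_common e Cl" and P: "definable e Cl P" and f: "\<forall>n. f n < (B::nat)"
  shows "{x. P ((s(0 := x)) \<circ> f)} \<in> Cl"
proof -
  obtain c \<phi> where c: "range c \<subseteq> Cl" "\<And>s. csat e s c \<phi> = P (s \<circ> f)"
    using definableD[OF P GB_common_set_class[OF gb] f] by blast
  then show ?thesis using GB_common_comprehension[OF gb c(1), of s \<phi>] by simp
qed

lemma definable_m_empty: "definable e Cl (\<lambda>s. m_empty e (s i))"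
  unfolding m_empty_def by (intro definable_logic)
lemma definable_m_upair: "definable e Cl (\<lambda>s. m_upair e (s i) (s j) (s k))"
  unfolding m_upair_def by (intro definable_logic)
lemma definable_m_pair: "definable e Cl (\<lambda>s. m_pair e (s i) (s j) (s k))"
  unfolding m_pair_def by (intro definable_logic definable_m_upair)
lemma definable_m_succ: "definable e Cl (\<lambda>s. m_succ e (s i) (s j))"
  unfolding m_succ_def by (intro definable_logic)
lemma definable_m_union2: "definable e Cl (\<lambda>s. m_union2 e (s i) (s j) (s k))"
  unfolding m_union2_def by (intro definable_logic)
lemma definable_m_transitive: "definable e Cl (\<lambda>s. m_transitive e (s i))"
  unfolding m_transitive_def by (intro definable_logic)
lemma definable_m_ord: "definable e Cl (\<lambda>s. m_ord e (s i))"
  unfolding m_ord_def by (intro definable_logic definable_m_transitive)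
lemma definable_m_nat: "definable e Cl (\<lambda>s. m_nat e (s i))"
  unfolding m_nat_def by (intro definable_logic definable_m_ord definable_m_empty definable_m_succ)
lemma definable_m_le: "definable e Cl (\<lambda>s. m_le e (s i) (s j))"
  unfolding m_le_def by (intro definable_logic)
lemma definable_m_num: "definable e Cl (\<lambda>s. m_num e k (s i))"
  by (induction k arbitrary: i) (simp_all add: definable_m_empty definable_logic definable_m_succ)
lemma definable_m_tag: "definable e Cl (\<lambda>s. m_tag e k (s i) (s j))"
  unfolding m_tag_def by (intro definable_logic definable_m_num definable_m_pair)
lemma definable_m_tag2: "definable e Cl (\<lambda>s. m_tag2 e k (s i) (s j) (s l))"
  unfolding m_tag2_def by (intro definable_logic definable_m_tag definable_m_pair)
lemma definable_isVar: "definable e Cl (\<lambda>s. isVar e (s i) (s j))"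
  unfolding isVar_def by (intro definable_logic definable_m_tag definable_m_nat)
lemma definable_isConst: "definable e Cl (\<lambda>s. isConst e (s i) (s j))"
  unfolding isConst_def by (intro definable_logic definable_m_tag)
lemma definable_isTerm: "definable e Cl (\<lambda>s. isTerm e (s i))"
  unfolding isTerm_def by (intro definable_logic definable_isVar definable_isConst)
lemma definable_isEqF: "definable e Cl (\<lambda>s. isEqF e (s i) (s j) (s k))"
  unfolding isEqF_def by (intro definable_logic definable_isTerm definable_m_tag2)
lemma definable_isMemF: "definable e Cl (\<lambda>s. isMemF e (s i) (s j) (s k))"
  unfolding isMemF_def by (intro definable_logic definable_isTerm definable_m_tag2)
lemma definable_isNeg: "definable e Cl (\<lambda>s. isNeg e (s i) (s j))"
  unfolding isNeg_def by (intro definable_logic definable_m_tag)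
lemma definable_isOr: "definable e Cl (\<lambda>s. isOr e (s i) (s j) (s k))"
  unfolding isOr_def by (intro definable_logic definable_m_tag2)
lemma definable_isEx: "definable e Cl (\<lambda>s. isEx e (s i) (s j) (s k))"
  unfolding isEx_def by (intro definable_logic definable_m_tag2 definable_m_nat)

lemmas definable_syntax = definable_m_empty definable_m_upair definable_m_pair definable_m_succ
  definable_m_union2 definable_m_transitive definable_m_ord definable_m_nat definable_m_le
  definable_m_num definable_m_tag definable_m_tag2 definable_isVar definable_isConst
  definable_isTerm definable_isEqF definable_isMemF definable_isNeg definable_isOr definable_isEx

lemma definable_LPformula: "definable e Cl (\<lambda>s. LPformula e (s i))"
  unfolding LPformula_def form_closed_def by (intro definable_logic definable_syntax)
lemma definable_LZFformula: "definable e Cl (\<lambda>s. LZFformula e (s i))"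
  unfolding LZFformula_def form_closed_def by (intro definable_logic definable_syntax)
lemma definable_inRel2: "definable e Cl (\<lambda>s. inRel2 e (s i) (s j) (s k))"
  unfolding inRel2_def by (intro definable_logic definable_syntax)
lemma definable_depth_closed: "definable e Cl (\<lambda>s. depth_closed e (s i))"
  unfolding depth_closed_def by (intro definable_logic definable_syntax definable_inRel2)
lemma definable_hasDepth: "definable e Cl (\<lambda>s. hasDepth e (s i) (s j))"
  unfolding hasDepth_def by (intro definable_logic definable_depth_closed definable_inRel2)
lemma definable_isAssign: "definable e Cl (\<lambda>s. isAssign e (s i))"
  unfolding isAssign_def by (intro definable_logic definable_syntax)
lemma definable_m_remove: "definable e Cl (\<lambda>s. m_remove e (s i) (s j) (s k))"
  unfolding m_remove_def by (intro definable_logic definable_syntax)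
lemma definable_tsubst: "definable e Cl (\<lambda>s. tsubst e (s i) (s j) (s k))"
  unfolding tsubst_def by (intro definable_logic definable_syntax)
lemma definable_m_triple: "definable e Cl (\<lambda>s. m_triple e (s i) (s j) (s k) (s l))"
  unfolding m_triple_def by (intro definable_logic definable_syntax)
lemma definable_inRel3: "definable e Cl (\<lambda>s. inRel3 e (s i) (s j) (s k) (s l))"
  unfolding inRel3_def by (intro definable_logic definable_m_triple)
lemma definable_subst_closed: "definable e Cl (\<lambda>s. subst_closed e (s i))"
  unfolding subst_closed_def
  by (intro definable_logic definable_syntax definable_m_triple definable_isAssign definable_tsubst
      definable_inRel3 definable_m_remove)
lemma definable_ssubst: "definable e Cl (\<lambda>s. ssubst e (s i) (s j) (s k))"
  unfolding ssubst_def by (intro definable_logic definable_subst_closed definable_inRel3)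
lemma definable_notFree: "definable e Cl (\<lambda>s. notFree e (s i) (s j))"
  unfolding notFree_def notfree_closed_def by (intro definable_logic definable_syntax definable_LPformula)
lemma definable_LPclosed: "definable e Cl (\<lambda>s. LPclosed e (s i))"
  unfolding LPclosed_def by (intro definable_logic definable_LPformula definable_notFree definable_syntax)

lemma definable_FSent_DepthF: "definable e Cl (\<lambda>s. s i \<in> FSent e (DepthF e (s j)))"
  unfolding FSent_def DepthF_def mem_Collect_eq
  by (intro definable_logic definable_LPclosed definable_LZFformula definable_hasDepth definable_m_le
      definable_isAssign definable_ssubst)

lemma truth_class_FSent: "truth_class e F T \<Longrightarrow> x \<in> T \<Longrightarrow> x \<in> FSent e F"
  unfolding truth_class_def by blast

lemma truth_class_eq:
  "truth_class e F T \<Longrightarrow> isConst e ta a \<Longrightarrow> isConst e tb b \<Longrightarrow> isEqF e p ta tb \<Longrightarrow> p \<in> T \<longleftrightarrow> a = b"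
  unfolding truth_class_def by (elim conjE) (drule spec, blast)

lemma truth_class_mem:
  "truth_class e F T \<Longrightarrow> isConst e ta a \<Longrightarrow> isConst e tb b \<Longrightarrow> isMemF e p ta tb \<Longrightarrow> p \<in> T \<longleftrightarrow> e a b"
  unfolding truth_class_def by (elim conjE) (drule spec, blast)

lemma truth_class_neg:
  "truth_class e F T \<Longrightarrow> x \<in> FSent e F \<Longrightarrow> isNeg e x \<psi> \<Longrightarrow> x \<in> T \<longleftrightarrow> \<psi> \<notin> T"
  unfolding truth_class_def by simp

lemma truth_class_or:
  "truth_class e F T \<Longrightarrow> x \<in> FSent e F \<Longrightarrow> isOr e x \<psi>1 \<psi>2 \<Longrightarrow> x \<in> T \<longleftrightarrow> \<psi>1 \<in> T \<or> \<psi>2 \<in> T"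
  unfolding truth_class_def by blast

lemma truth_class_ex:
  "truth_class e F T \<Longrightarrow> x \<in> FSent e F \<Longrightarrow> isEx e x i \<psi> \<Longrightarrow>
    x \<in> T \<longleftrightarrow> (\<exists>a g y. isSingAssign e g i a \<and> ssubst e g \<psi> y \<and> y \<in> T)"
  unfolding truth_class_def by blast

lemma FSent_LPclosed: "x \<in> FSent e F \<Longrightarrow> LPclosed e x"
  unfolding FSent_def by blast

lemma FSent_mono: "F \<subseteq> F' \<Longrightarrow> FSent e F \<subseteq> FSent e F'"
  unfolding FSent_def by blast

locale gb_model =
  fixes e :: "'a \<Rightarrow> 'a \<Rightarrow> bool" and Cl :: "'a set set"
  assumes gb: "GB_common e Cl"
begin

lemma extensionality: "(\<And>z. e z x \<longleftrightarrow> e z y) \<Longrightarrow> x = y"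
proof -
  have "\<forall>x y. (\<forall>z. e z x \<longleftrightarrow> e z y) \<longrightarrow> x = y"
    using gb unfolding GB_common_def by (elim conjE)
  then show "(\<And>z. e z x \<longleftrightarrow> e z y) \<Longrightarrow> x = y" by blast
qed

lemma pairing: "\<exists>p. m_upair e p a b"
proof -
  have "\<forall>a b. \<exists>p. m_upair e p a b" using gb unfolding GB_common_def by (elim conjE)
  then show ?thesis by blast
qed

lemma union_exists: "\<exists>u. \<forall>z. e z u \<longleftrightarrow> (\<exists>y. e y x \<and> e z y)"
proof -
  have "\<forall>x. \<exists>u. \<forall>z. e z u \<longleftrightarrow> (\<exists>y. e y x \<and> e z y)"
    using gb unfolding GB_common_def by (elim conjE)
  then show ?thesis by blast
qed

lemma power_exists: "\<exists>p. \<forall>z. e z p \<longleftrightarrow> (\<forall>w. e w z \<longrightarrow> e w x)"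
proof -
  have "\<forall>x. \<exists>p. \<forall>z. e z p \<longleftrightarrow> (\<forall>w. e w z \<longrightarrow> e w x)"
    using gb unfolding GB_common_def by (elim conjE)
  then show ?thesis by blast
qed

lemma separation: "A \<in> Cl \<Longrightarrow> \<exists>y. \<forall>z. e z y \<longleftrightarrow> e z x \<and> z \<in> A"
proof -
  have "\<forall>A\<in>Cl. \<forall>x. \<exists>y. \<forall>z. e z y \<longleftrightarrow> e z x \<and> z \<in> A"
    using gb unfolding GB_common_def by (elim conjE)
  then show "A \<in> Cl \<Longrightarrow> ?thesis" by blast
qed

lemma foundation: "e y x \<Longrightarrow> \<exists>y. e y x \<and> \<not> (\<exists>z. e z y \<and> e z x)"
proof -
  have "\<forall>x. (\<exists>y. e y x) \<longrightarrow> (\<exists>y. e y x \<and> \<not> (\<exists>z. e z y \<and> e z x))"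
    using gb unfolding GB_common_def by (elim conjE)
  then show "e y x \<Longrightarrow> ?thesis" by blast
qed

lemma definable_class1: "definable e Cl (\<lambda>s. P (s 0)) \<Longrightarrow> {x. P x} \<in> Cl"
  using definable_class[OF gb, of "\<lambda>s. P (s 0)" "\<lambda>_. 0" 1 undefined] by simp

lemma definable_class2: "definable e Cl (\<lambda>s. P (s 0) (s 1)) \<Longrightarrow> {x. P x a} \<in> Cl"
  using definable_class[OF gb, of "\<lambda>s. P (s 0) (s 1)" "\<lambda>n. if n = 0 then 0 else 1" 2 "\<lambda>_. a"]
  by (simp add: comp_def)

lemma definable_class3: "definable e Cl (\<lambda>s. P (s 0) (s 1) (s 2)) \<Longrightarrow> {x. P x a b} \<in> Cl"
  using definable_class[OF gb, of "\<lambda>s. P (s 0) (s 1) (s 2)"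
      "\<lambda>n. if n = 0 then 0 else if n = 1 then 1 else 2" 3
      "(\<lambda>_. a)(2 := b)"]
  by (simp add: comp_def)

lemma bounded_class_is_set:
  assumes "A \<in> Cl" "\<And>z. z \<in> A \<Longrightarrow> e z X"
  shows "\<exists>y. \<forall>z. e z y \<longleftrightarrow> z \<in> A"
  using separation[OF assms(1), of X] assms(2) by blast

lemma empty_exists: "\<exists>x. m_empty e x"
  using separation[OF definable_class1[OF definable_False]] unfolding m_empty_def by auto

lemma empty_unique: "m_empty e x \<Longrightarrow> m_empty e y \<Longrightarrow> x = y"
  unfolding m_empty_def using extensionality by blast

lemma singleton_exists: "\<exists>S. \<forall>z. e z S \<longleftrightarrow> z = x"
  using pairing unfolding m_upair_def by blast

lemma upair_eq: "m_upair e p a b \<Longrightarrow> m_upair e p c d \<Longrightarrow> (a = c \<and> b = d) \<or> (a = d \<and> b = c)"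
  unfolding m_upair_def by metis

lemma pair_exists: "\<exists>p. m_pair e p a b"
  unfolding m_pair_def using pairing by blast

lemma pair_inject: "m_pair e p a b \<Longrightarrow> m_pair e p c d \<Longrightarrow> a = c \<and> b = d"
  unfolding m_pair_def using upair_eq by metis

lemma triple_exists: "\<exists>q. m_triple e q g x y"
  unfolding m_triple_def using pair_exists by blast

lemma triple_inject: "m_triple e q g x y \<Longrightarrow> m_triple e q g' x' y' \<Longrightarrow> g = g' \<and> x = x' \<and> y = y'"
  unfolding m_triple_def using pair_inject by metis

lemma union2_exists: "\<exists>u. m_union2 e u x y"
proof -
  obtain p where p: "m_upair e p x y" using pairing by blast
  obtain u where "\<forall>z. e z u \<longleftrightarrow> (\<exists>w. e w p \<and> e z w)" using union_exists by blast
  then show ?thesis using p unfolding m_union2_def m_upair_def by auto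
qed

lemma succ_exists: "\<exists>y. m_succ e y x"
proof -
  obtain p where p: "m_upair e p x x" using pairing by blast
  obtain u where "m_union2 e u x p" using union2_exists by blast
  then show ?thesis using p unfolding m_union2_def m_upair_def m_succ_def by blast
qed

lemma succ_unique: "m_succ e y x \<Longrightarrow> m_succ e y' x \<Longrightarrow> y = y'"
  unfolding m_succ_def using extensionality by blast

lemma mem_succ: "m_succ e y x \<Longrightarrow> e x y"
  unfolding m_succ_def by blast

lemma mem_irrefl: "\<not> e x x"
proof
  assume "e x x"
  obtain p where p: "m_upair e p x x" using pairing by blast
  then have "e x p" unfolding m_upair_def by blast
  then obtain y where "e y p" "\<not> (\<exists>z. e z y \<and> e z p)" using foundation by blast
  then show False using p \<open>e x x\<close> unfolding m_upair_def by auto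
qed

lemma num_exists: "\<exists>t. m_num e k t"
proof (induction k)
  case 0
  then show ?case using empty_exists by simp
next
  case (Suc k)
  then show ?case using succ_exists by (metis m_num.simps(2))
qed

lemma num_unique: "m_num e k t \<Longrightarrow> m_num e k t' \<Longrightarrow> t = t'"
proof (induction k arbitrary: t t')
  case 0
  then show ?case using empty_unique by simp
next
  case (Suc k)
  then obtain y y' where "m_num e k y" "m_succ e t y" "m_num e k y'" "m_succ e t' y'" by auto
  then show ?case using Suc.IH succ_unique by blast
qed

lemma num_mem: "m_num e j t \<Longrightarrow> m_num e k t' \<Longrightarrow> j < k \<Longrightarrow> e t t'"
proof (induction k arbitrary: t')
  case 0
  then show ?case by simp
next
  case (Suc k)
  then obtain y where y: "m_num e k y" "m_succ e t' y" by auto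
  have "t = y \<or> e t y"
    using Suc num_unique y(1) by (cases "j = k") auto
  then show ?case using y(2) unfolding m_succ_def by blast
qed

lemma num_inject: "m_num e j t \<Longrightarrow> m_num e k t \<Longrightarrow> j = k"
  by (metis linorder_neqE_nat num_mem mem_irrefl)

lemma tag_exists: "\<exists>p. m_tag e k p a"
  unfolding m_tag_def using num_exists pair_exists by blast

lemma tag2_exists: "\<exists>p. m_tag2 e k p a b"
  unfolding m_tag2_def using tag_exists pair_exists by blast

lemma tag_inject: "m_tag e k p a \<Longrightarrow> m_tag e k' p a' \<Longrightarrow> k = k' \<and> a = a'"
  unfolding m_tag_def using pair_inject num_inject by metis

lemma tag2_inject: "m_tag2 e k p a b \<Longrightarrow> m_tag2 e k' p a' b' \<Longrightarrow> k = k' \<and> a = a' \<and> b = b'"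
  unfolding m_tag2_def using tag_inject pair_inject by metis

definition has_tag :: "'a \<Rightarrow> nat \<Rightarrow> bool" where
  "has_tag x k \<longleftrightarrow> (\<exists>a. m_tag e k x a)"

lemma has_tag_unique: "has_tag x k \<Longrightarrow> has_tag x k' \<Longrightarrow> k = k'"
  unfolding has_tag_def using tag_inject by blast

lemma has_tag_syntax:
  "isVar e t i \<Longrightarrow> has_tag t 0"
  "isConst e t a \<Longrightarrow> has_tag t 1"
  "isEqF e x t1 t2 \<Longrightarrow> has_tag x 2"
  "isMemF e x t1 t2 \<Longrightarrow> has_tag x 3"
  "isNeg e x \<theta> \<Longrightarrow> has_tag x 4"
  "isOr e x \<theta>1 \<theta>2 \<Longrightarrow> has_tag x 5"
  "isEx e x i \<theta> \<Longrightarrow> has_tag x 6"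
  unfolding isVar_def isConst_def isEqF_def isMemF_def isNeg_def isOr_def isEx_def m_tag2_def
    has_tag_def
  by blast+

lemma syntax_distinct:
  "isVar e t i \<Longrightarrow> isConst e t a \<Longrightarrow> False"
  "isEqF e x t1 t2 \<Longrightarrow> isMemF e x s1 s2 \<Longrightarrow> False"
  "isEqF e x t1 t2 \<Longrightarrow> isNeg e x \<theta> \<Longrightarrow> False"
  "isEqF e x t1 t2 \<Longrightarrow> isOr e x \<theta>1 \<theta>2 \<Longrightarrow> False"
  "isEqF e x t1 t2 \<Longrightarrow> isEx e x i \<theta> \<Longrightarrow> False"
  "isMemF e x t1 t2 \<Longrightarrow> isNeg e x \<theta> \<Longrightarrow> False"
  "isMemF e x t1 t2 \<Longrightarrow> isOr e x \<theta>1 \<theta>2 \<Longrightarrow> False"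
  "isMemF e x t1 t2 \<Longrightarrow> isEx e x i \<theta> \<Longrightarrow> False"
  "isNeg e x \<theta> \<Longrightarrow> isOr e x \<theta>1 \<theta>2 \<Longrightarrow> False"
  "isNeg e x \<theta> \<Longrightarrow> isEx e x i \<theta>' \<Longrightarrow> False"
  "isOr e x \<theta>1 \<theta>2 \<Longrightarrow> isEx e x i \<theta> \<Longrightarrow> False"
  by (fastforce dest: has_tag_syntax has_tag_unique)+

lemma syntax_inject:
  "isVar e t i \<Longrightarrow> isVar e t j \<Longrightarrow> i = j"
  "isConst e t a \<Longrightarrow> isConst e t b \<Longrightarrow> a = b"
  "isEqF e x t1 t2 \<Longrightarrow> isEqF e x s1 s2 \<Longrightarrow> t1 = s1 \<and> t2 = s2"
  "isMemF e x t1 t2 \<Longrightarrow> isMemF e x s1 s2 \<Longrightarrow> t1 = s1 \<and> t2 = s2"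
  "isNeg e x \<theta> \<Longrightarrow> isNeg e x \<theta>' \<Longrightarrow> \<theta> = \<theta>'"
  "isOr e x \<theta>1 \<theta>2 \<Longrightarrow> isOr e x \<theta>1' \<theta>2' \<Longrightarrow> \<theta>1 = \<theta>1' \<and> \<theta>2 = \<theta>2'"
  "isEx e x i \<theta> \<Longrightarrow> isEx e x j \<theta>' \<Longrightarrow> i = j \<and> \<theta> = \<theta>'"
  unfolding isVar_def isConst_def isEqF_def isMemF_def isNeg_def isOr_def isEx_def
  by (blast dest: tag_inject tag2_inject)+

subsection \<open>Ordinals and natural numbers\<close>

lemma foundation_induct:
  assumes A: "A \<in> Cl" and K: "m_transitive e K"
    and step: "\<And>n. e n K \<Longrightarrow> (\<forall>n'. e n' n \<longrightarrow> n' \<in> A) \<Longrightarrow> n \<in> A"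
    and n: "e n K"
  shows "n \<in> A"
proof (rule ccontr)
  assume "n \<notin> A"
  have "{x. x \<notin> A} \<in> Cl" using A by (intro definable_class1 definable_logic)
  then obtain Y where Y: "\<forall>z. e z Y \<longleftrightarrow> e z K \<and> z \<in> {x. x \<notin> A}"
    using separation by blast
  then have "e n Y" using n \<open>n \<notin> A\<close> by simp
  then obtain m where m: "e m Y" "\<not> (\<exists>z. e z m \<and> e z Y)" using foundation by blast
  then have "e m K" "\<forall>n'. e n' m \<longrightarrow> n' \<in> A"
    using Y K unfolding m_transitive_def by blast+
  then have "m \<in> A" using step by blast
  then show False using m Y by simp
qed

lemma ord_mem: "m_ord e x \<Longrightarrow> e y x \<Longrightarrow> m_ord e y"
  unfolding m_ord_def m_transitive_def by blast

lemma ord_comparable_step: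
  assumes x: "m_ord e x" and y: "m_ord e y"
    and IHx: "\<forall>x'. e x' x \<longrightarrow> e x' y \<or> x' = y \<or> e y x'"
    and IHy: "\<forall>y'. e y' y \<longrightarrow> e x y' \<or> x = y' \<or> e y' x"
  shows "e x y \<or> x = y \<or> e y x"
proof (rule ccontr)
  assume nc: "\<not> (e x y \<or> x = y \<or> e y x)"
  have tx: "e u x" if "e u v" "e v x" for u v
    using x that unfolding m_ord_def m_transitive_def by blast
  have ty: "e u y" if "e u v" "e v y" for u v
    using y that unfolding m_ord_def m_transitive_def by blast
  have "x = y"
  proof (rule extensionality)
    fix z
    show "e z x \<longleftrightarrow> e z y"
    proof
      assume "e z x"
      then show "e z y" using IHx nc tx by blast
    next
      assume "e z y"
      then show "e z x" using IHy nc ty by blast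
    qed
  qed
  then show False using nc by simp
qed

lemma ord_trichotomy:
  assumes a: "m_ord e a" and b: "m_ord e b"
  shows "e a b \<or> a = b \<or> e b a"
proof -
  obtain sa sb K where "m_succ e sa a" "m_succ e sb b" "m_union2 e K sa sb"
    using succ_exists union2_exists by metis
  then have K: "\<And>z. e z K \<longleftrightarrow> z = a \<or> z = b \<or> e z a \<or> e z b"
    unfolding m_union2_def m_succ_def by auto
  have ta: "m_transitive e a" and tb: "m_transitive e b" using a b unfolding m_ord_def by blast+
  have trK: "m_transitive e K" unfolding m_transitive_def
  proof (intro allI impI)
    fix y z assume "e z y \<and> e y K"
    then have "e z y" "y = a \<or> y = b \<or> e y a \<or> e y b" using K by blast+
    then have "e z a \<or> e z b" using ta tb unfolding m_transitive_def by blast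
    then show "e z K" using K by blast
  qed
  have ordK: "m_ord e z" if "e z K" for z
    using K[of z] that a b ord_mem[OF a] ord_mem[OF b] by blast
  let ?A = "{x. \<forall>y. e y K \<longrightarrow> e x y \<or> x = y \<or> e y x}"
  have "?A \<in> Cl" by (rule definable_class2) (intro definable_logic)
  have "x \<in> ?A" if "e x K" for x
    using \<open>?A \<in> Cl\<close> trK _ that
  proof (rule foundation_induct)
    fix x assume x: "e x K" and IHx: "\<forall>x'. e x' x \<longrightarrow> x' \<in> ?A"
    let ?B = "{y. e x y \<or> x = y \<or> e y x}"
    have "?B \<in> Cl" by (rule definable_class2) (intro definable_logic)
    have "y \<in> ?B" if "e y K" for y
      using \<open>?B \<in> Cl\<close> trK _ that
    proof (rule foundation_induct)
      fix y assume "e y K" and "\<forall>y'. e y' y \<longrightarrow> y' \<in> ?B"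
      then show "y \<in> ?B" using ord_comparable_step[OF ordK[OF x] ordK] IHx by blast
    qed
    then show "x \<in> ?A" by blast
  qed
  then show ?thesis using K by blast
qed

lemma nat_ord: "m_nat e x \<Longrightarrow> m_ord e x"
  unfolding m_nat_def by blast

lemma nat_transitive: "m_nat e x \<Longrightarrow> e z y \<Longrightarrow> e y x \<Longrightarrow> e z x"
  unfolding m_nat_def m_ord_def m_transitive_def by blast

lemma nat_mem: "m_nat e x \<Longrightarrow> e y x \<Longrightarrow> m_nat e y"
proof -
  assume h: "m_nat e x" "e y x"
  then have "m_ord e y" using ord_mem unfolding m_nat_def by blast
  moreover have "\<forall>m. (m = y \<or> e m y) \<longrightarrow> m_empty e m \<or> (\<exists>k. m_succ e m k)"
    using h unfolding m_nat_def m_ord_def m_transitive_def by blast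
  ultimately show ?thesis unfolding m_nat_def by blast
qed

lemma nat_empty: "m_empty e z \<Longrightarrow> m_nat e z"
  unfolding m_nat_def m_ord_def m_transitive_def m_empty_def by simp

lemma nat_succ:
  assumes n: "m_nat e n" and y: "m_succ e y n"
  shows "m_nat e y"
proof -
  have yn: "\<And>w. e w y \<longleftrightarrow> e w n \<or> w = n" using y unfolding m_succ_def by blast
  have tn: "m_transitive e n" and tm: "\<And>w. e w n \<Longrightarrow> m_transitive e w"
    using n unfolding m_nat_def m_ord_def by blast+
  have "m_transitive e y"
    unfolding m_transitive_def using yn tn unfolding m_transitive_def by blast
  then have "m_ord e y" unfolding m_ord_def using yn tn tm by blast
  moreover have "m_empty e m \<or> (\<exists>k. m_succ e m k)" if "m = y \<or> e m y" for m
    using that y yn n unfolding m_nat_def by blast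
  ultimately show ?thesis unfolding m_nat_def by blast
qed

lemma nat_class_induct:
  assumes A: "A \<in> Cl" and n: "m_nat e n"
    and step: "\<And>n. m_nat e n \<Longrightarrow> (\<forall>n'. e n' n \<longrightarrow> n' \<in> A) \<Longrightarrow> n \<in> A"
  shows "n \<in> A"
proof -
  obtain K where K: "m_succ e K n" using succ_exists by blast
  then have natK: "m_nat e K" using nat_succ n by blast
  then have "m_transitive e K" unfolding m_nat_def m_ord_def by blast
  then show ?thesis
  proof (rule foundation_induct[OF A _ _ mem_succ[OF K]])
    fix m assume "e m K" "\<forall>n'. e n' m \<longrightarrow> n' \<in> A"
    then show "m \<in> A" using step nat_mem[OF natK] by blast
  qed
qed

lemma nat_subset_le:
  assumes a: "m_nat e a" and b: "m_nat e b" and sub: "\<And>z. e z a \<Longrightarrow> e z b"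
  shows "m_le e a b"
proof -
  have "\<not> e b a" using sub mem_irrefl by blast
  moreover have "e a b \<or> a = b \<or> e b a" using ord_trichotomy[OF nat_ord[OF a] nat_ord[OF b]] .
  ultimately show ?thesis unfolding m_le_def by blast
qed

lemma empty_le_nat: "m_nat e d \<Longrightarrow> m_empty e z \<Longrightarrow> m_le e z d"
  by (rule nat_subset_le) (auto simp: nat_empty m_empty_def)

lemma le_nat: "m_nat e k \<Longrightarrow> m_le e d k \<Longrightarrow> m_nat e d"
  unfolding m_le_def using nat_mem by blast

lemma mem_le_nat: "m_nat e k \<Longrightarrow> m_le e d k \<Longrightarrow> e x d \<Longrightarrow> e x k"
  unfolding m_le_def using nat_transitive by blast

lemma pred_mem_le_nat: "m_nat e k \<Longrightarrow> m_le e d k \<Longrightarrow> m_succ e d d' \<Longrightarrow> e d' k"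
  using mem_le_nat mem_succ by blast

lemma union_pred_mem_le_nat:
  assumes k: "m_nat e k" and dk: "m_le e d k" and du: "m_succ e d u"
    and u: "m_union2 e u d1 d2" and d1: "m_nat e d1" and d2: "m_nat e d2"
  shows "e d1 k \<and> e d2 k"
proof -
  have uk: "e u k" using pred_mem_le_nat[OF k dk du] .
  then have nu: "m_nat e u" using nat_mem[OF k] by blast
  have "m_le e d1 u" "m_le e d2 u"
    using nat_subset_le[OF d1 nu] nat_subset_le[OF d2 nu] u unfolding m_union2_def by blast+
  then show ?thesis using nat_transitive[OF k _ uk] uk unfolding m_le_def by blast
qed

lemma LPformula_cases:
  assumes "LPformula e x"
  shows "(\<exists>t1 t2. (isEqF e x t1 t2 \<or> isMemF e x t1 t2) \<and> isTerm e t1 \<and> isTerm e t2)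
    \<or> (\<exists>\<theta>. isNeg e x \<theta> \<and> LPformula e \<theta>)
    \<or> (\<exists>\<theta>1 \<theta>2. isOr e x \<theta>1 \<theta>2 \<and> LPformula e \<theta>1 \<and> LPformula e \<theta>2)
    \<or> (\<exists>i \<theta>. isEx e x i \<theta> \<and> LPformula e \<theta>)"
proof -
  obtain S where S: "e x S" "form_closed e (isTerm e) S"
    using assms unfolding LPformula_def by blast
  then have "\<And>\<theta>. e \<theta> S \<Longrightarrow> LPformula e \<theta>" unfolding LPformula_def by blast
  then show ?thesis using S unfolding form_closed_def by metis
qed

lemma LZFformula_cases:
  assumes "LZFformula e x"
  shows "(\<exists>t1 t2. isEqF e x t1 t2 \<or> isMemF e x t1 t2)
    \<or> (\<exists>\<theta>. isNeg e x \<theta> \<and> LZFformula e \<theta>)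
    \<or> (\<exists>\<theta>1 \<theta>2. isOr e x \<theta>1 \<theta>2 \<and> LZFformula e \<theta>1 \<and> LZFformula e \<theta>2)
    \<or> (\<exists>i \<theta>. isEx e x i \<theta> \<and> LZFformula e \<theta>)"
proof -
  obtain S where S: "e x S" "form_closed e (\<lambda>t. \<exists>i. isVar e t i) S"
    using assms unfolding LZFformula_def by blast
  then have "\<And>\<theta>. e \<theta> S \<Longrightarrow> LZFformula e \<theta>" unfolding LZFformula_def by blast
  then show ?thesis using S unfolding form_closed_def by metis
qed

lemma notFree_cases:
  assumes "notFree e i x"
  shows "(\<exists>t1 t2. (isEqF e x t1 t2 \<or> isMemF e x t1 t2) \<and> \<not> isVar e t1 i \<and> \<not> isVar e t2 i)
    \<or> (\<exists>\<theta>. isNeg e x \<theta> \<and> notFree e i \<theta>)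
    \<or> (\<exists>\<theta>1 \<theta>2. isOr e x \<theta>1 \<theta>2 \<and> notFree e i \<theta>1 \<and> notFree e i \<theta>2)
    \<or> (\<exists>j \<theta>. isEx e x j \<theta> \<and> ((j = i \<and> LPformula e \<theta>) \<or> notFree e i \<theta>))"
proof -
  obtain N where N: "e x N" "notfree_closed e i N" using assms unfolding notFree_def by blast
  then have "\<And>\<theta>. e \<theta> N \<Longrightarrow> notFree e i \<theta>" unfolding notFree_def by blast
  then show ?thesis using N unfolding notfree_closed_def by metis
qed

lemma LPformula_neg: "LPformula e x \<Longrightarrow> isNeg e x \<theta> \<Longrightarrow> LPformula e \<theta>"
  using LPformula_cases syntax_distinct syntax_inject by metis
lemma LPformula_or: "LPformula e x \<Longrightarrow> isOr e x \<theta>1 \<theta>2 \<Longrightarrow> LPformula e \<theta>1 \<and> LPformula e \<theta>2"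
  using LPformula_cases syntax_distinct syntax_inject by metis
lemma LPformula_atom:
  "LPformula e x \<Longrightarrow> isEqF e x t1 t2 \<or> isMemF e x t1 t2 \<Longrightarrow> isTerm e t1 \<and> isTerm e t2"
  using LPformula_cases syntax_distinct syntax_inject by metis

lemma LZFformula_neg: "LZFformula e x \<Longrightarrow> isNeg e x \<theta> \<Longrightarrow> LZFformula e \<theta>"
  using LZFformula_cases syntax_distinct syntax_inject by metis
lemma LZFformula_or:
  "LZFformula e x \<Longrightarrow> isOr e x \<theta>1 \<theta>2 \<Longrightarrow> LZFformula e \<theta>1 \<and> LZFformula e \<theta>2"
  using LZFformula_cases syntax_distinct syntax_inject by metis
lemma LZFformula_ex: "LZFformula e x \<Longrightarrow> isEx e x i \<theta> \<Longrightarrow> LZFformula e \<theta>"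
  using LZFformula_cases syntax_distinct syntax_inject by metis

lemma notFree_neg: "notFree e i x \<Longrightarrow> isNeg e x \<theta> \<Longrightarrow> notFree e i \<theta>"
  using notFree_cases syntax_distinct syntax_inject by metis
lemma notFree_or: "notFree e i x \<Longrightarrow> isOr e x \<theta>1 \<theta>2 \<Longrightarrow> notFree e i \<theta>1 \<and> notFree e i \<theta>2"
  using notFree_cases syntax_distinct syntax_inject by metis
lemma notFree_atom:
  "notFree e i x \<Longrightarrow> isEqF e x t1 t2 \<or> isMemF e x t1 t2 \<Longrightarrow> \<not> isVar e t1 i \<and> \<not> isVar e t2 i"
  using notFree_cases syntax_distinct syntax_inject by metis

lemma LPclosed_neg: "LPclosed e x \<Longrightarrow> isNeg e x \<theta> \<Longrightarrow> LPclosed e \<theta>"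
  unfolding LPclosed_def using LPformula_neg notFree_neg by blast
lemma LPclosed_or: "LPclosed e x \<Longrightarrow> isOr e x \<theta>1 \<theta>2 \<Longrightarrow> LPclosed e \<theta>1 \<and> LPclosed e \<theta>2"
  unfolding LPclosed_def using LPformula_or notFree_or by blast

lemma LPclosed_atom:
  assumes "LPclosed e x" "isEqF e x t1 t2 \<or> isMemF e x t1 t2"
  shows "(\<exists>a. isConst e t1 a) \<and> (\<exists>b. isConst e t2 b)"
proof -
  have "isTerm e t1 \<and> isTerm e t2" using assms LPformula_atom unfolding LPclosed_def by blast
  moreover have "\<And>i. m_nat e i \<Longrightarrow> \<not> isVar e t1 i \<and> \<not> isVar e t2 i"
    using assms notFree_atom unfolding LPclosed_def by blast
  ultimately show ?thesis unfolding isTerm_def isVar_def by blast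
qed

lemma LPclosed_cases:
  assumes "LPclosed e x"
  obtains (atom) t1 t2 a b where "isEqF e x t1 t2 \<or> isMemF e x t1 t2" "isConst e t1 a" "isConst e t2 b"
  | (neg) \<psi> where "isNeg e x \<psi>" "LPclosed e \<psi>"
  | (disj) \<psi>1 \<psi>2 where "isOr e x \<psi>1 \<psi>2" "LPclosed e \<psi>1" "LPclosed e \<psi>2"
  | (ex) i \<psi> where "isEx e x i \<psi>"
proof -
  have "LPformula e x" using assms unfolding LPclosed_def by blast
  from LPformula_cases[OF this] show ?thesis
    using that LPclosed_atom[OF assms] LPclosed_neg[OF assms] LPclosed_or[OF assms] by metis
qed

definition subst_step :: "'a \<Rightarrow> 'a \<Rightarrow> 'a \<Rightarrow> 'a \<Rightarrow> bool" where
  "subst_step R g \<chi> \<chi>' \<longleftrightarrow>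
     (\<exists>t1 t2 s1 s2. isEqF e \<chi> t1 t2 \<and> tsubst e g t1 s1 \<and> tsubst e g t2 s2 \<and> isEqF e \<chi>' s1 s2)
   \<or> (\<exists>t1 t2 s1 s2. isMemF e \<chi> t1 t2 \<and> tsubst e g t1 s1 \<and> tsubst e g t2 s2 \<and> isMemF e \<chi>' s1 s2)
   \<or> (\<exists>\<theta> \<theta>'. isNeg e \<chi> \<theta> \<and> isNeg e \<chi>' \<theta>' \<and> inRel3 e R g \<theta> \<theta>')
   \<or> (\<exists>\<theta>1 \<theta>2 \<theta>1' \<theta>2'. isOr e \<chi> \<theta>1 \<theta>2 \<and> isOr e \<chi>' \<theta>1' \<theta>2'
        \<and> inRel3 e R g \<theta>1 \<theta>1' \<and> inRel3 e R g \<theta>2 \<theta>2')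
   \<or> (\<exists>i \<theta> \<theta>' g'. isEx e \<chi> i \<theta> \<and> isEx e \<chi>' i \<theta>' \<and> m_remove e g' g i \<and> inRel3 e R g' \<theta> \<theta>')"

lemma subst_stepE:
  assumes "subst_step R g \<chi> \<chi>'"
  obtains (eq) t1 t2 s1 s2 where "isEqF e \<chi> t1 t2" "tsubst e g t1 s1" "tsubst e g t2 s2"
      "isEqF e \<chi>' s1 s2"
  | (mem) t1 t2 s1 s2 where "isMemF e \<chi> t1 t2" "tsubst e g t1 s1" "tsubst e g t2 s2"
      "isMemF e \<chi>' s1 s2"
  | (neg) \<theta> \<theta>' where "isNeg e \<chi> \<theta>" "isNeg e \<chi>' \<theta>'" "inRel3 e R g \<theta> \<theta>'"
  | (disj) \<theta>1 \<theta>2 \<theta>1' \<theta>2' where "isOr e \<chi> \<theta>1 \<theta>2" "isOr e \<chi>' \<theta>1' \<theta>2'"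
      "inRel3 e R g \<theta>1 \<theta>1'" "inRel3 e R g \<theta>2 \<theta>2'"
  | (ex) i \<theta> \<theta>' g' where "isEx e \<chi> i \<theta>" "isEx e \<chi>' i \<theta>'" "m_remove e g' g i"
      "inRel3 e R g' \<theta> \<theta>'"
  using assms unfolding subst_step_def by blast

lemma subst_closed_iff:
  "subst_closed e R \<longleftrightarrow> (\<forall>q. e q R \<longrightarrow>
     (\<exists>g \<chi> \<chi>'. m_triple e q g \<chi> \<chi>' \<and> isAssign e g \<and> subst_step R g \<chi> \<chi>'))"
  unfolding subst_closed_def subst_step_def ..

lemma subst_closed_step:
  assumes R: "subst_closed e R" and x: "inRel3 e R g \<phi> x"
  shows "isAssign e g \<and> subst_step R g \<phi> x"
proof -
  obtain q where q: "m_triple e q g \<phi> x" "e q R" using x unfolding inRel3_def by blast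
  then obtain g' \<chi> \<chi>' where "m_triple e q g' \<chi> \<chi>'" "isAssign e g'" "subst_step R g' \<chi> \<chi>'"
    using R unfolding subst_closed_iff by blast
  then show ?thesis using triple_inject[OF q(1)] by metis
qed

lemma ssubst_step: "ssubst e g \<phi> x \<Longrightarrow> \<exists>R. subst_closed e R \<and> isAssign e g \<and> subst_step R g \<phi> x"
  unfolding ssubst_def using subst_closed_step by blast

lemma ssubst_of_subst_closed: "subst_closed e R \<Longrightarrow> inRel3 e R g \<theta> \<theta>' \<Longrightarrow> ssubst e g \<theta> \<theta>'"
  unfolding ssubst_def by blast

lemma ssubst_isAssign: "ssubst e g \<phi> x \<Longrightarrow> isAssign e g"
  using ssubst_step by blast

lemma ssubst_neg:
  assumes "ssubst e g \<phi> x" "isNeg e x \<psi>"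
  shows "\<exists>\<theta>. isNeg e \<phi> \<theta> \<and> ssubst e g \<theta> \<psi>"
proof -
  obtain R where R: "subst_closed e R" "subst_step R g \<phi> x" using ssubst_step assms(1) by blast
  from R(2) show ?thesis
  proof (cases rule: subst_stepE)
    case (neg \<theta> \<theta>')
    then show ?thesis using assms(2) syntax_inject(5) ssubst_of_subst_closed[OF R(1)] by metis
  qed (use assms(2) syntax_distinct in metis)+
qed

lemma ssubst_or:
  assumes "ssubst e g \<phi> x" "isOr e x \<psi>1 \<psi>2"
  shows "\<exists>\<theta>1 \<theta>2. isOr e \<phi> \<theta>1 \<theta>2 \<and> ssubst e g \<theta>1 \<psi>1 \<and> ssubst e g \<theta>2 \<psi>2"
proof -
  obtain R where R: "subst_closed e R" "subst_step R g \<phi> x" using ssubst_step assms(1) by blast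
  from R(2) show ?thesis
  proof (cases rule: subst_stepE)
    case (disj \<theta>1 \<theta>2 \<theta>1' \<theta>2')
    then show ?thesis using assms(2) syntax_inject(6) ssubst_of_subst_closed[OF R(1)] by metis
  qed (use assms(2) syntax_distinct in metis)+
qed

lemma ssubst_ex:
  assumes "ssubst e g \<phi> x" "isEx e x i \<psi>"
  shows "\<exists>\<theta> g'. isEx e \<phi> i \<theta> \<and> m_remove e g' g i \<and> ssubst e g' \<theta> \<psi>"
proof -
  obtain R where R: "subst_closed e R" "subst_step R g \<phi> x" using ssubst_step assms(1) by blast
  from R(2) show ?thesis
  proof (cases rule: subst_stepE)
    case (ex j \<theta> \<theta>' g')
    then show ?thesis using assms(2) syntax_inject(7) ssubst_of_subst_closed[OF R(1)] by metis
  qed (use assms(2) syntax_distinct in metis)+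
qed

definition depth_step :: "'a \<Rightarrow> 'a \<Rightarrow> 'a \<Rightarrow> bool" where
  "depth_step R \<chi> d \<longleftrightarrow>
     (\<exists>t1 t2. isEqF e \<chi> t1 t2 \<or> isMemF e \<chi> t1 t2) \<and> m_empty e d
   \<or> (\<exists>\<theta> d'. isNeg e \<chi> \<theta> \<and> inRel2 e R \<theta> d' \<and> m_succ e d d')
   \<or> (\<exists>\<theta>1 \<theta>2 d1 d2 u. isOr e \<chi> \<theta>1 \<theta>2 \<and> inRel2 e R \<theta>1 d1 \<and> inRel2 e R \<theta>2 d2
        \<and> m_union2 e u d1 d2 \<and> m_succ e d u)
   \<or> (\<exists>i \<theta> d'. isEx e \<chi> i \<theta> \<and> inRel2 e R \<theta> d' \<and> m_succ e d d')"

lemma depth_stepE: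
  assumes "depth_step R \<chi> d"
  obtains (atom) t1 t2 where "isEqF e \<chi> t1 t2 \<or> isMemF e \<chi> t1 t2" "m_empty e d"
  | (neg) \<theta> d' where "isNeg e \<chi> \<theta>" "inRel2 e R \<theta> d'" "m_succ e d d'"
  | (disj) \<theta>1 \<theta>2 d1 d2 u where "isOr e \<chi> \<theta>1 \<theta>2" "inRel2 e R \<theta>1 d1" "inRel2 e R \<theta>2 d2"
      "m_union2 e u d1 d2" "m_succ e d u"
  | (ex) i \<theta> d' where "isEx e \<chi> i \<theta>" "inRel2 e R \<theta> d'" "m_succ e d d'"
  using assms unfolding depth_step_def by blast

lemma depth_closed_iff:
  "depth_closed e R \<longleftrightarrow> (\<forall>q. e q R \<longrightarrow> (\<exists>\<chi> d. m_pair e q \<chi> d \<and> m_nat e d \<and> depth_step R \<chi> d))"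
  unfolding depth_closed_def depth_step_def ..

lemma hasDepth_step: "hasDepth e \<phi> d \<Longrightarrow> \<exists>R. depth_closed e R \<and> m_nat e d \<and> depth_step R \<phi> d"
  unfolding hasDepth_def inRel2_def depth_closed_iff by (metis pair_inject)

lemma hasDepth_of_depth_closed: "depth_closed e R \<Longrightarrow> inRel2 e R \<theta> d \<Longrightarrow> hasDepth e \<theta> d"
  unfolding hasDepth_def by blast

lemma hasDepth_nat: "hasDepth e \<phi> d \<Longrightarrow> m_nat e d"
  using hasDepth_step by blast

lemma hasDepth_neg:
  assumes "hasDepth e \<phi> d" "isNeg e \<phi> \<theta>"
  shows "\<exists>d'. hasDepth e \<theta> d' \<and> m_succ e d d'"
proof -
  obtain R where R: "depth_closed e R" "depth_step R \<phi> d" using hasDepth_step assms(1) by blast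
  from R(2) show ?thesis
  proof (cases rule: depth_stepE)
    case (neg \<theta>' d')
    then show ?thesis using assms(2) syntax_inject(5) hasDepth_of_depth_closed[OF R(1)] by metis
  qed (use assms(2) syntax_distinct in metis)+
qed

lemma hasDepth_or:
  assumes "hasDepth e \<phi> d" "isOr e \<phi> \<theta>1 \<theta>2"
  shows "\<exists>d1 d2 u. hasDepth e \<theta>1 d1 \<and> hasDepth e \<theta>2 d2 \<and> m_union2 e u d1 d2 \<and> m_succ e d u"
proof -
  obtain R where R: "depth_closed e R" "depth_step R \<phi> d" using hasDepth_step assms(1) by blast
  from R(2) show ?thesis
  proof (cases rule: depth_stepE)
    case (disj \<theta>1' \<theta>2' d1 d2 u)
    then show ?thesis using assms(2) syntax_inject(6) hasDepth_of_depth_closed[OF R(1)] by metis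
  qed (use assms(2) syntax_distinct in metis)+
qed

lemma hasDepth_ex:
  assumes "hasDepth e \<phi> d" "isEx e \<phi> i \<theta>"
  shows "\<exists>d'. hasDepth e \<theta> d' \<and> m_succ e d d'"
proof -
  obtain R where R: "depth_closed e R" "depth_step R \<phi> d" using hasDepth_step assms(1) by blast
  from R(2) show ?thesis
  proof (cases rule: depth_stepE)
    case (ex j \<theta>' d')
    then show ?thesis using assms(2) syntax_inject(7) hasDepth_of_depth_closed[OF R(1)] by metis
  qed (use assms(2) syntax_distinct in metis)+
qed

subsection \<open>Composing substitutions\<close>

lemma union_union_bound: "\<exists>Y. \<forall>p a b. e p X \<and> m_pair e p a b \<longrightarrow> e a Y \<and> e b Y"
proof -
  obtain U1 where U1: "\<forall>z. e z U1 \<longleftrightarrow> (\<exists>y. e y X \<and> e z y)" using union_exists by blast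
  obtain U2 where U2: "\<forall>z. e z U2 \<longleftrightarrow> (\<exists>y. e y U1 \<and> e z y)" using union_exists by blast
  have "e a U2 \<and> e b U2" if "e p X" "m_pair e p a b" for p a b
    using that U1 U2 unfolding m_pair_def m_upair_def by metis
  then show ?thesis by blast
qed

lemma power_power_bound: "\<exists>Y. \<forall>p a b. e a X \<and> e b X \<and> m_pair e p a b \<longrightarrow> e p Y"
proof -
  obtain P1 where P1: "\<forall>z. e z P1 \<longleftrightarrow> (\<forall>w. e w z \<longrightarrow> e w X)" using power_exists by blast
  obtain P2 where P2: "\<forall>z. e z P2 \<longleftrightarrow> (\<forall>w. e w z \<longrightarrow> e w P1)" using power_exists by blast
  have "e p P2" if "e a X" "e b X" "m_pair e p a b" for p a b
    using that P1 P2 unfolding m_pair_def m_upair_def by metis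
  then show ?thesis by blast
qed

lemma triple_components_bound:
  "\<exists>X. \<forall>q g x y. e q R \<and> m_triple e q g x y \<longrightarrow> (\<forall>z. e z g \<longrightarrow> e z X) \<and> e x X \<and> e y X"
proof -
  obtain Y1 where Y1: "\<forall>p a b. e p R \<and> m_pair e p a b \<longrightarrow> e a Y1 \<and> e b Y1"
    using union_union_bound by blast
  obtain Y2 where Y2: "\<forall>p a b. e p Y1 \<and> m_pair e p a b \<longrightarrow> e a Y2 \<and> e b Y2"
    using union_union_bound by blast
  obtain Y3 where Y3: "\<forall>z. e z Y3 \<longleftrightarrow> (\<exists>y. e y Y1 \<and> e z y)" using union_exists by blast
  obtain X where X: "m_union2 e X Y2 Y3" using union2_exists by blast
  show ?thesis
    using Y1 Y2 Y3 X unfolding m_triple_def m_union2_def by metis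
qed

lemma triples_bound:
  "\<exists>Q. \<forall>q g x y. (\<forall>z. e z g \<longrightarrow> e z X) \<and> e x X \<and> e y X \<and> m_triple e q g x y \<longrightarrow> e q Q"
proof -
  obtain P where P: "\<forall>z. e z P \<longleftrightarrow> (\<forall>w. e w z \<longrightarrow> e w X)" using power_exists by blast
  obtain W where W: "m_union2 e W X P" using union2_exists by blast
  obtain Y where Y: "\<forall>p a b. e a W \<and> e b W \<and> m_pair e p a b \<longrightarrow> e p Y"
    using power_power_bound by blast
  obtain W' where W': "m_union2 e W' W Y" using union2_exists by blast
  obtain Q where Q: "\<forall>p a b. e a W' \<and> e b W' \<and> m_pair e p a b \<longrightarrow> e p Q"
    using power_power_bound by blast
  show ?thesis
    using P W Y W' Q unfolding m_triple_def m_union2_def by metis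
qed

definition dom_disjoint :: "'a \<Rightarrow> 'a \<Rightarrow> bool" where
  "dom_disjoint g1 g2 \<longleftrightarrow>
     \<not> (\<exists>i a b p q. m_pair e p i a \<and> e p g1 \<and> m_pair e q i b \<and> e q g2)"

lemma definable_dom_disjoint: "definable e Cl (\<lambda>s. dom_disjoint (s i) (s j))"
  unfolding dom_disjoint_def by (intro definable_logic definable_syntax)

lemma isAssign_union:
  "isAssign e g1 \<Longrightarrow> isAssign e g2 \<Longrightarrow> dom_disjoint g1 g2 \<Longrightarrow> m_union2 e g g1 g2 \<Longrightarrow> isAssign e g"
  unfolding isAssign_def dom_disjoint_def m_union2_def by metis

lemma m_remove_union:
  "m_remove e g1' g1 j \<Longrightarrow> m_remove e g2' g2 j \<Longrightarrow> m_union2 e g g1 g2 \<Longrightarrow> m_union2 e g' g1' g2'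
    \<Longrightarrow> m_remove e g' g j"
  unfolding m_remove_def m_union2_def by blast

lemma dom_disjoint_remove:
  "dom_disjoint g1 g2 \<Longrightarrow> m_remove e g1' g1 j \<Longrightarrow> m_remove e g2' g2 j \<Longrightarrow> dom_disjoint g1' g2'"
  unfolding m_remove_def dom_disjoint_def by blast

lemma dom_disjoint_remove_single:
  "m_remove e g' g i \<Longrightarrow> isSingAssign e h i a \<Longrightarrow> dom_disjoint g' h"
  unfolding m_remove_def isSingAssign_def dom_disjoint_def using pair_inject by metis

text \<open>Once g1 has replaced a variable by a constant, g2 leaves it alone.\<close>
lemma tsubst_union:
  assumes t: "tsubst e g1 t s" and s: "tsubst e g2 s r" and g: "m_union2 e g g1 g2"
  shows "tsubst e g t r"
proof -
  have g_iff: "\<And>p. e p g \<longleftrightarrow> e p g1 \<or> e p g2" using g unfolding m_union2_def by blast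
  from t show ?thesis unfolding tsubst_def
  proof (elim disjE exE conjE)
    fix i a p assume "isVar e t i" "m_pair e p i a" "e p g1" "isConst e s a"
    moreover then have "r = s" using s syntax_distinct(1) unfolding tsubst_def by blast
    ultimately show "(\<exists>i a p. isVar e t i \<and> m_pair e p i a \<and> e p g \<and> isConst e r a) \<or>
      isTerm e t \<and> \<not> (\<exists>i a p. isVar e t i \<and> m_pair e p i a \<and> e p g) \<and> r = t"
      using g_iff by blast
  next
    assume "isTerm e t" "\<not> (\<exists>i a p. isVar e t i \<and> m_pair e p i a \<and> e p g1)" "s = t"
    then show "(\<exists>i a p. isVar e t i \<and> m_pair e p i a \<and> e p g \<and> isConst e r a) \<or>
      isTerm e t \<and> \<not> (\<exists>i a p. isVar e t i \<and> m_pair e p i a \<and> e p g) \<and> r = t"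
      using s g_iff unfolding tsubst_def by blast
  qed
qed

lemma subst_step_eqD:
  assumes "subst_step R g \<chi> \<chi>'" "isEqF e \<chi> t1 t2"
  shows "\<exists>s1 s2. tsubst e g t1 s1 \<and> tsubst e g t2 s2 \<and> isEqF e \<chi>' s1 s2"
  using assms(1) by (cases rule: subst_stepE) (use assms(2) syntax_inject(3) syntax_distinct in metis)+

lemma subst_step_memD:
  assumes "subst_step R g \<chi> \<chi>'" "isMemF e \<chi> t1 t2"
  shows "\<exists>s1 s2. tsubst e g t1 s1 \<and> tsubst e g t2 s2 \<and> isMemF e \<chi>' s1 s2"
  using assms(1) by (cases rule: subst_stepE) (use assms(2) syntax_inject(4) syntax_distinct in metis)+

lemma subst_step_negD:
  assumes "subst_step R g \<chi> \<chi>'" "isNeg e \<chi> \<theta>"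
  shows "\<exists>\<theta>'. isNeg e \<chi>' \<theta>' \<and> inRel3 e R g \<theta> \<theta>'"
  using assms(1) by (cases rule: subst_stepE) (use assms(2) syntax_inject(5) syntax_distinct in metis)+

lemma subst_step_orD:
  assumes "subst_step R g \<chi> \<chi>'" "isOr e \<chi> \<theta>1 \<theta>2"
  shows "\<exists>\<theta>1' \<theta>2'. isOr e \<chi>' \<theta>1' \<theta>2' \<and> inRel3 e R g \<theta>1 \<theta>1' \<and> inRel3 e R g \<theta>2 \<theta>2'"
  using assms(1) by (cases rule: subst_stepE) (use assms(2) syntax_inject(6) syntax_distinct in metis)+

lemma subst_step_exD:
  assumes "subst_step R g \<chi> \<chi>'" "isEx e \<chi> i \<theta>"
  shows "\<exists>\<theta>' g'. isEx e \<chi>' i \<theta>' \<and> m_remove e g' g i \<and> inRel3 e R g' \<theta> \<theta>'"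
  using assms(1) by (cases rule: subst_stepE) (use assms(2) syntax_inject(7) syntax_distinct in metis)+

lemma subst_step_comp:
  assumes R: "\<And>g g1 g2 a b c. m_union2 e g g1 g2 \<Longrightarrow> dom_disjoint g1 g2 \<Longrightarrow>
      inRel3 e R1 g1 a b \<Longrightarrow> inRel3 e R2 g2 b c \<Longrightarrow> inRel3 e R g a c"
    and g: "m_union2 e g g1 g2" "dom_disjoint g1 g2"
    and s1: "subst_step R1 g1 \<chi> \<chi>'" and s2: "subst_step R2 g2 \<chi>' \<chi>''"
  shows "subst_step R g \<chi> \<chi>''"
  using s1
proof (cases rule: subst_stepE)
  case (eq t1 t2 s1 s2)
  obtain u1 u2 where u: "tsubst e g2 s1 u1" "tsubst e g2 s2 u2" "isEqF e \<chi>'' u1 u2"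
    using subst_step_eqD[OF s2 eq(4)] by blast
  have "tsubst e g t1 u1" "tsubst e g t2 u2"
    using tsubst_union[OF eq(2) u(1) g(1)] tsubst_union[OF eq(3) u(2) g(1)] .
  then show ?thesis using eq(1) u(3) unfolding subst_step_def by blast
next
  case (mem t1 t2 s1 s2)
  obtain u1 u2 where u: "tsubst e g2 s1 u1" "tsubst e g2 s2 u2" "isMemF e \<chi>'' u1 u2"
    using subst_step_memD[OF s2 mem(4)] by blast
  have "tsubst e g t1 u1" "tsubst e g t2 u2"
    using tsubst_union[OF mem(2) u(1) g(1)] tsubst_union[OF mem(3) u(2) g(1)] .
  then show ?thesis using mem(1) u(3) unfolding subst_step_def by blast
next
  case (neg \<theta> \<theta>')
  then show ?thesis using subst_step_negD[OF s2 neg(2)] R[OF g neg(3)]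
    unfolding subst_step_def by blast
next
  case (disj \<theta>1 \<theta>2 \<theta>1' \<theta>2')
  then show ?thesis using subst_step_orD[OF s2 disj(2)] R[OF g disj(3)] R[OF g disj(4)]
    unfolding subst_step_def by blast
next
  case (ex j \<theta> \<theta>' g1')
  obtain \<eta>' g2' where \<eta>': "isEx e \<chi>'' j \<eta>'" "m_remove e g2' g2 j" "inRel3 e R2 g2' \<theta>' \<eta>'"
    using subst_step_exD[OF s2 ex(2)] by blast
  obtain g' where g': "m_union2 e g' g1' g2'" using union2_exists by blast
  have "m_remove e g' g j" using m_remove_union[OF ex(3) \<eta>'(2) g(1) g'] .
  moreover have "inRel3 e R g' \<theta> \<eta>'"
    using R[OF g' dom_disjoint_remove[OF g(2) ex(3) \<eta>'(2)] ex(4) \<eta>'(3)] .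
  ultimately show ?thesis using ex(1) \<eta>'(1) unfolding subst_step_def by blast
qed

definition composed_triple :: "'a \<Rightarrow> 'a \<Rightarrow> 'a \<Rightarrow> bool" where
  "composed_triple R1 R2 q \<longleftrightarrow> (\<exists>g g1 g2 \<chi> \<chi>' \<chi>''. m_triple e q g \<chi> \<chi>'' \<and> m_union2 e g g1 g2
     \<and> dom_disjoint g1 g2 \<and> inRel3 e R1 g1 \<chi> \<chi>' \<and> inRel3 e R2 g2 \<chi>' \<chi>'')"

lemma composed_triples_set: "\<exists>R. \<forall>q. e q R \<longleftrightarrow> composed_triple R1 R2 q"
proof -
  have "definable e Cl (\<lambda>s. composed_triple (s 1) (s 2) (s 0))" unfolding composed_triple_def
    by (intro definable_logic definable_syntax definable_m_triple definable_inRel3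
        definable_dom_disjoint)
  then have cl: "{q. composed_triple R1 R2 q} \<in> Cl" by (rule definable_class3)
  obtain X1 where X1: "\<forall>q g x y. e q R1 \<and> m_triple e q g x y \<longrightarrow> (\<forall>z. e z g \<longrightarrow> e z X1) \<and> e x X1 \<and> e y X1"
    using triple_components_bound by blast
  obtain X2 where X2: "\<forall>q g x y. e q R2 \<and> m_triple e q g x y \<longrightarrow> (\<forall>z. e z g \<longrightarrow> e z X2) \<and> e x X2 \<and> e y X2"
    using triple_components_bound by blast
  obtain X where X: "m_union2 e X X1 X2" using union2_exists by blast
  obtain Q where Q: "\<forall>q g x y. (\<forall>z. e z g \<longrightarrow> e z X) \<and> e x X \<and> e y X \<and> m_triple e q g x y \<longrightarrow> e q Q"
    using triples_bound by blast
  have "e q Q" if "composed_triple R1 R2 q" for q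
    using that X1 X2 X Q unfolding composed_triple_def inRel3_def m_union2_def by metis
  then show ?thesis using bounded_class_is_set[OF cl] by blast
qed

lemma ssubst_comp:
  assumes s1: "ssubst e g1 \<theta> \<psi>" and s2: "ssubst e g2 \<psi> y" and g: "m_union2 e g g1 g2" "dom_disjoint g1 g2"
  shows "ssubst e g \<theta> y"
proof -
  obtain R1 R2 where R1: "subst_closed e R1" "inRel3 e R1 g1 \<theta> \<psi>"
    and R2: "subst_closed e R2" "inRel3 e R2 g2 \<psi> y" using s1 s2 unfolding ssubst_def by blast
  obtain R where R: "\<forall>q. e q R \<longleftrightarrow> composed_triple R1 R2 q" using composed_triples_set by blast
  have R_comp: "inRel3 e R h a c"
    if "m_union2 e h h1 h2" "dom_disjoint h1 h2" "inRel3 e R1 h1 a b" "inRel3 e R2 h2 b c" for h h1 h2 a b c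
  proof -
    obtain q where "m_triple e q h a c" using triple_exists by blast
    then show ?thesis using that R unfolding inRel3_def composed_triple_def by blast
  qed
  have "subst_closed e R" unfolding subst_closed_iff
  proof (intro allI impI)
    fix q assume "e q R"
    then obtain h h1 h2 \<chi> \<chi>' \<chi>'' where q: "m_triple e q h \<chi> \<chi>''" "m_union2 e h h1 h2"
      "dom_disjoint h1 h2" "inRel3 e R1 h1 \<chi> \<chi>'" "inRel3 e R2 h2 \<chi>' \<chi>''"
      using R unfolding composed_triple_def by blast
    have "isAssign e h1 \<and> subst_step R1 h1 \<chi> \<chi>'" "isAssign e h2 \<and> subst_step R2 h2 \<chi>' \<chi>''"
      using subst_closed_step R1(1) R2(1) q(4,5) by blast+
    moreover have "subst_step R h \<chi> \<chi>''" if "subst_step R1 h1 \<chi> \<chi>'" "subst_step R2 h2 \<chi>' \<chi>''"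
      using subst_step_comp[of R1 R2 R h h1 h2, OF R_comp q(2,3) that] .
    ultimately show "\<exists>g \<chi> \<chi>'. m_triple e q g \<chi> \<chi>' \<and> isAssign e g \<and> subst_step R g \<chi> \<chi>'"
      using q(1) isAssign_union[OF _ _ q(3,2)] by blast
  qed
  then show ?thesis using R_comp[OF g R1(2) R2(2)] unfolding ssubst_def by blast
qed

definition atomic_tagged :: "nat \<Rightarrow> 'a \<Rightarrow> 'a \<Rightarrow> 'a \<Rightarrow> bool" where
  "atomic_tagged k p t1 t2 \<longleftrightarrow> isTerm e t1 \<and> isTerm e t2 \<and> m_tag2 e k p t1 t2"

lemma isEqF_isMemF_atomic_tagged:
  "isEqF e p t1 t2 \<or> isMemF e p t1 t2 \<longleftrightarrow> (\<exists>k\<in>{2, 3}. atomic_tagged k p t1 t2)"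
  unfolding isEqF_def isMemF_def atomic_tagged_def by auto

lemma atomic_tagged_same:
  "k \<in> {2, 3} \<Longrightarrow> atomic_tagged k \<phi> t1 t2 \<Longrightarrow> atomic_tagged k p s1 s2 \<Longrightarrow>
    (isEqF e \<phi> t1 t2 \<and> isEqF e p s1 s2) \<or> (isMemF e \<phi> t1 t2 \<and> isMemF e p s1 s2)"
  unfolding isEqF_def isMemF_def atomic_tagged_def by auto

lemma LZFformula_atomic:
  assumes "isEqF e \<phi> v1 v2 \<or> isMemF e \<phi> v1 v2" "isVar e v1 i" "isVar e v2 j"
  shows "LZFformula e \<phi>"
proof -
  obtain S where S: "\<forall>w. e w S \<longleftrightarrow> w = \<phi>" using singleton_exists by blast
  have "form_closed e (\<lambda>t. \<exists>i. isVar e t i) S" unfolding form_closed_def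
  proof (intro allI impI disjI1)
    fix \<chi> assume "e \<chi> S"
    then have "\<chi> = \<phi>" using S by blast
    then show "\<exists>t1 t2. (isEqF e \<chi> t1 t2 \<or> isMemF e \<chi> t1 t2) \<and> (\<exists>i. isVar e t1 i) \<and> (\<exists>i. isVar e t2 i)"
      using assms by blast
  qed
  then show ?thesis unfolding LZFformula_def using S by blast
qed

lemma LPclosed_atomic:
  assumes atom: "isEqF e p t1 t2 \<or> isMemF e p t1 t2" and t: "isConst e t1 a" "isConst e t2 b"
  shows "LPclosed e p"
proof -
  obtain S where S: "\<forall>w. e w S \<longleftrightarrow> w = p" using singleton_exists by blast
  have "isTerm e t1" "isTerm e t2" using t unfolding isTerm_def by blast+
  then have "form_closed e (isTerm e) S" unfolding form_closed_def
    using atom by (intro allI impI disjI1) (auto simp: S)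
  then have "LPformula e p" unfolding LPformula_def using S by blast
  moreover have "\<not> isVar e t1 i" "\<not> isVar e t2 i" for i
    using t syntax_distinct(1) by blast+
  then have "notfree_closed e i S" for i unfolding notfree_closed_def
    using atom by (intro allI impI disjI1) (auto simp: S)
  then have "notFree e i p" for i unfolding notFree_def using S by blast
  ultimately show ?thesis unfolding LPclosed_def by blast
qed

lemma hasDepth_atomic:
  assumes "isEqF e \<phi> t1 t2 \<or> isMemF e \<phi> t1 t2" "m_empty e z"
  shows "hasDepth e \<phi> z"
proof -
  obtain q where q: "m_pair e q \<phi> z" using pair_exists by blast
  obtain R where R: "\<forall>w. e w R \<longleftrightarrow> w = q" using singleton_exists by blast
  have "depth_step R \<phi> z" using assms unfolding depth_step_def by blast
  then have "depth_closed e R"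
    unfolding depth_closed_iff using q nat_empty[OF assms(2)] by (auto simp: R)
  then show ?thesis unfolding hasDepth_def inRel2_def using R q by blast
qed

lemma ssubst_atomic:
  assumes "k \<in> {2, 3}" "atomic_tagged k \<phi> t1 t2" "atomic_tagged k p s1 s2"
    and g: "isAssign e g" "tsubst e g t1 s1" "tsubst e g t2 s2"
  shows "ssubst e g \<phi> p"
proof -
  obtain q where q: "m_triple e q g \<phi> p" using triple_exists by blast
  obtain R where R: "\<forall>w. e w R \<longleftrightarrow> w = q" using singleton_exists by blast
  have "subst_step R g \<phi> p"
    using atomic_tagged_same[OF assms(1-3)] g unfolding subst_step_def by blast
  then have "subst_closed e R" unfolding subst_closed_iff using q g(1) by (auto simp: R)
  then show ?thesis unfolding ssubst_def inRel3_def using R q by blast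
qed

lemma tsubst_var: "isVar e t i \<Longrightarrow> m_pair e p i a \<Longrightarrow> e p g \<Longrightarrow> isConst e t' a \<Longrightarrow> tsubst e g t t'"
  unfolding tsubst_def by blast

lemma assign_two_exists:
  assumes "m_nat e i" "m_nat e j" "i \<noteq> j"
  shows "\<exists>g p q. isAssign e g \<and> m_pair e p i a \<and> m_pair e q j b \<and> e p g \<and> e q g"
proof -
  obtain p q g where pq: "m_pair e p i a" "m_pair e q j b" and g: "m_upair e g p q"
    using pair_exists pairing by metis
  have "isAssign e g"
    unfolding isAssign_def using g pq assms pair_inject unfolding m_upair_def by metis
  then show ?thesis using pq g unfolding m_upair_def by blast
qed

text \<open>An atomic sentence with constants is the instance of the atomic formula on the
  variables v0 and v1 under the assignment sending 0 and 1 to the two constants.\<close>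
lemma atomic_FSent_DepthF:
  assumes n: "m_nat e n" and p: "isEqF e p ta tb \<or> isMemF e p ta tb"
    and t: "isConst e ta a" "isConst e tb b"
  shows "p \<in> FSent e (DepthF e n)"
proof -
  obtain k where k: "k \<in> {2, 3}" "atomic_tagged k p ta tb"
    using p isEqF_isMemF_atomic_tagged by blast
  obtain z one where z: "m_empty e z" and one: "m_succ e one z" using empty_exists succ_exists by blast
  then have nat: "m_nat e z" "m_nat e one" and "z \<noteq> one"
    using nat_empty nat_succ mem_succ unfolding m_empty_def by blast+
  obtain v0 v1 where v: "isVar e v0 z" "isVar e v1 one"
    using tag_exists nat unfolding isVar_def by blast
  obtain \<phi> where "m_tag2 e k \<phi> v0 v1" using tag2_exists by blast
  then have \<phi>: "atomic_tagged k \<phi> v0 v1"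
    using v unfolding atomic_tagged_def isTerm_def by blast
  then have atom: "isEqF e \<phi> v0 v1 \<or> isMemF e \<phi> v0 v1"
    using k(1) isEqF_isMemF_atomic_tagged by blast
  obtain g where g: "isAssign e g" "tsubst e g v0 ta" "tsubst e g v1 tb"
    using assign_two_exists[OF nat \<open>z \<noteq> one\<close>] tsubst_var v t by metis
  have "ssubst e g \<phi> p" using ssubst_atomic[OF k(1) \<phi> k(2) g] .
  moreover have "\<phi> \<in> DepthF e n"
    using LZFformula_atomic[OF atom v] hasDepth_atomic[OF atom z] empty_le_nat[OF n z]
    unfolding DepthF_def by blast
  ultimately show ?thesis
    unfolding FSent_def using LZFformula_atomic[OF atom v] g(1) LPclosed_atomic[OF p t] by blast
qed

definition is_instance :: "'a \<Rightarrow> 'a \<Rightarrow> 'a \<Rightarrow> bool" where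
  "is_instance \<phi> g x \<longleftrightarrow> LZFformula e \<phi> \<and> isAssign e g \<and> ssubst e g \<phi> x"

lemma FSent_DepthF_iff:
  "x \<in> FSent e (DepthF e n) \<longleftrightarrow>
     LPclosed e x \<and> (\<exists>\<phi> g d. is_instance \<phi> g x \<and> hasDepth e \<phi> d \<and> m_le e d n)"
  unfolding FSent_def DepthF_def is_instance_def by blast

lemma DepthF_mono: "m_nat e p \<Longrightarrow> m_le e d p \<Longrightarrow> DepthF e d \<subseteq> DepthF e p"
  unfolding DepthF_def using mem_le_nat unfolding m_le_def by blast

lemma is_instance_neg:
  assumes "is_instance \<phi> g x" "hasDepth e \<phi> d" "isNeg e x \<psi>"
  shows "\<exists>\<theta> d'. is_instance \<theta> g \<psi> \<and> hasDepth e \<theta> d' \<and> m_succ e d d'"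
proof -
  obtain \<theta> where \<theta>: "isNeg e \<phi> \<theta>" "ssubst e g \<theta> \<psi>"
    using ssubst_neg assms unfolding is_instance_def by blast
  then show ?thesis
    using hasDepth_neg[OF assms(2) \<theta>(1)] LZFformula_neg assms(1) unfolding is_instance_def by blast
qed

lemma is_instance_or:
  assumes "is_instance \<phi> g x" "hasDepth e \<phi> d" "isOr e x \<psi>1 \<psi>2"
  shows "\<exists>\<theta>1 \<theta>2 d1 d2 u. is_instance \<theta>1 g \<psi>1 \<and> is_instance \<theta>2 g \<psi>2
    \<and> hasDepth e \<theta>1 d1 \<and> hasDepth e \<theta>2 d2 \<and> m_union2 e u d1 d2 \<and> m_succ e d u"
proof -
  obtain \<theta>1 \<theta>2 where \<theta>: "isOr e \<phi> \<theta>1 \<theta>2" "ssubst e g \<theta>1 \<psi>1" "ssubst e g \<theta>2 \<psi>2"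
    using ssubst_or assms unfolding is_instance_def by blast
  then show ?thesis
    using hasDepth_or[OF assms(2) \<theta>(1)] LZFformula_or assms(1) unfolding is_instance_def by blast
qed

text \<open>The matrix \<theta> of \<phi> = \<exists>v_i \<theta> is instantiated by g with v_i removed; composing with
  the assignment of a to v_i turns it into an instance of the witness sentence y.\<close>
lemma is_instance_ex:
  assumes "is_instance \<phi> g x" "hasDepth e \<phi> d" "isEx e x i \<psi>"
    and y: "isSingAssign e h i a" "ssubst e h \<psi> y"
  shows "\<exists>\<theta> g' d'. is_instance \<theta> g' y \<and> hasDepth e \<theta> d' \<and> m_succ e d d'"
proof -
  obtain \<theta> g' where \<theta>: "isEx e \<phi> i \<theta>" "m_remove e g' g i" "ssubst e g' \<theta> \<psi>"
    using ssubst_ex assms unfolding is_instance_def by blast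
  obtain g'' where g'': "m_union2 e g'' g' h" using union2_exists by blast
  have "ssubst e g'' \<theta> y"
    using ssubst_comp[OF \<theta>(3) y(2) g'' dom_disjoint_remove_single[OF \<theta>(2) y(1)]] .
  then show ?thesis
    using hasDepth_ex[OF assms(2) \<theta>(1)] LZFformula_ex \<theta>(1) assms(1) ssubst_isAssign
    unfolding is_instance_def by blast
qed

definition immediate_subsentence :: "'a \<Rightarrow> 'a \<Rightarrow> bool" where
  "immediate_subsentence y x \<longleftrightarrow> isNeg e x y \<or> (\<exists>\<psi>. isOr e x y \<psi> \<or> isOr e x \<psi> y)
     \<or> (\<exists>i \<psi> h a. isEx e x i \<psi> \<and> isSingAssign e h i a \<and> ssubst e h \<psi> y)"

lemma FSent_DepthF_subsentence:
  assumes n: "m_nat e n" and x: "x \<in> FSent e (DepthF e n)"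
    and y: "immediate_subsentence y x" "LPclosed e y"
  shows "\<exists>n'. e n' n \<and> y \<in> FSent e (DepthF e n')"
proof -
  obtain \<phi> g d where \<phi>: "is_instance \<phi> g x" "hasDepth e \<phi> d" "m_le e d n"
    using x FSent_DepthF_iff by blast
  have "\<exists>\<theta> h d'. is_instance \<theta> h y \<and> hasDepth e \<theta> d' \<and> e d' n"
    using y(1) unfolding immediate_subsentence_def
  proof (elim disjE exE conjE)
    assume "isNeg e x y"
    then show ?thesis
      using is_instance_neg[OF \<phi>(1,2)] pred_mem_le_nat[OF n \<phi>(3)] by metis
  next
    fix \<psi> assume "isOr e x y \<psi>"
    then show ?thesis using is_instance_or[OF \<phi>(1,2)]
      union_pred_mem_le_nat[OF n \<phi>(3)] hasDepth_nat by metis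
  next
    fix \<psi> assume "isOr e x \<psi> y"
    then show ?thesis using is_instance_or[OF \<phi>(1,2)]
      union_pred_mem_le_nat[OF n \<phi>(3)] hasDepth_nat by metis
  next
    fix i \<psi> h a assume "isEx e x i \<psi>" "isSingAssign e h i a" "ssubst e h \<psi> y"
    then show ?thesis
      using is_instance_ex[OF \<phi>(1,2)] pred_mem_le_nat[OF n \<phi>(3)] by metis
  qed
  then show ?thesis using y(2) unfolding FSent_DepthF_iff m_le_def by blast
qed

lemma FSent_DepthF_subsentence_closed:
  assumes "m_nat e n" "x \<in> FSent e (DepthF e n)" "immediate_subsentence y x" "LPclosed e y"
  shows "y \<in> FSent e (DepthF e n)"
proof -
  obtain n' where "e n' n" "y \<in> FSent e (DepthF e n')"
    using FSent_DepthF_subsentence[OF assms] by blast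
  then show ?thesis
    using FSent_mono[OF DepthF_mono[OF assms(1)]] unfolding m_le_def by blast
qed

lemma hasDepth_empty_atomic:
  assumes "hasDepth e \<phi> z" "m_empty e z"
  shows "\<exists>t1 t2. isEqF e \<phi> t1 t2 \<or> isMemF e \<phi> t1 t2"
proof -
  obtain R where "depth_step R \<phi> z" using hasDepth_step assms(1) by blast
  then show ?thesis
    by (cases rule: depth_stepE) (use assms(2) mem_succ in \<open>unfold m_empty_def, blast+\<close>)
qed

lemma ssubst_atomic_inv:
  assumes "ssubst e g \<phi> x" "isEqF e \<phi> t1 t2 \<or> isMemF e \<phi> t1 t2"
  shows "\<exists>s1 s2. isEqF e x s1 s2 \<or> isMemF e x s1 s2"
proof -
  obtain R where "subst_step R g \<phi> x" using ssubst_step assms(1) by blast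
  then show ?thesis
    by (cases rule: subst_stepE) (use assms(2) syntax_distinct in metis)+
qed

lemma FSent_DepthF_empty_atomic:
  assumes "m_empty e z" "x \<in> FSent e (DepthF e z)"
  shows "\<exists>t1 t2. isEqF e x t1 t2 \<or> isMemF e x t1 t2"
proof -
  obtain \<phi> g d where \<phi>: "is_instance \<phi> g x" "hasDepth e \<phi> d" "m_le e d z"
    using assms(2) FSent_DepthF_iff by blast
  then have "d = z" using assms(1) unfolding m_le_def m_empty_def by blast
  then show ?thesis
    using hasDepth_empty_atomic ssubst_atomic_inv \<phi> assms(1) unfolding is_instance_def by blast
qed

subsection \<open>Partial truth classes agree\<close>

lemma truth_classes_agree_step:
  assumes T: "truth_class e F T" and T': "truth_class e F' T'"
    and x: "x \<in> FSent e F" "x \<in> FSent e F'"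
    and IH: "\<And>y. immediate_subsentence y x \<Longrightarrow> LPclosed e y \<Longrightarrow> y \<in> T \<longleftrightarrow> y \<in> T'"
  shows "x \<in> T \<longleftrightarrow> x \<in> T'"
  using FSent_LPclosed[OF x(1)]
proof (cases rule: LPclosed_cases)
  case (atom t1 t2 a b)
  then show ?thesis
    using truth_class_eq[OF T] truth_class_eq[OF T'] truth_class_mem[OF T] truth_class_mem[OF T']
    by (elim disjE) simp_all
next
  case (neg \<psi>)
  then have "\<psi> \<in> T \<longleftrightarrow> \<psi> \<in> T'" using IH unfolding immediate_subsentence_def by blast
  then show ?thesis using truth_class_neg[OF T x(1) neg(1)] truth_class_neg[OF T' x(2) neg(1)] by simp
next
  case (disj \<psi>1 \<psi>2)
  then have "\<psi>1 \<in> T \<longleftrightarrow> \<psi>1 \<in> T'" "\<psi>2 \<in> T \<longleftrightarrow> \<psi>2 \<in> T'"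
    using IH unfolding immediate_subsentence_def by blast+
  then show ?thesis using truth_class_or[OF T x(1) disj(1)] truth_class_or[OF T' x(2) disj(1)] by simp
next
  case (ex i \<psi>)
  have witness: "y \<in> T \<longleftrightarrow> y \<in> T'"
    if "isSingAssign e h i a" "ssubst e h \<psi> y" "y \<in> T \<or> y \<in> T'" for h a y
  proof -
    have "immediate_subsentence y x" using that(1,2) ex unfolding immediate_subsentence_def by blast
    moreover have "LPclosed e y"
      using that(3) FSent_LPclosed[OF truth_class_FSent[OF T]] FSent_LPclosed[OF truth_class_FSent[OF T']]
      by blast
    ultimately show ?thesis by (rule IH)
  qed
  have "(\<exists>a h y. isSingAssign e h i a \<and> ssubst e h \<psi> y \<and> y \<in> T) \<longleftrightarrow>
      (\<exists>a h y. isSingAssign e h i a \<and> ssubst e h \<psi> y \<and> y \<in> T')"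
    using witness by meson
  then show ?thesis using truth_class_ex[OF T x(1) ex] truth_class_ex[OF T' x(2) ex] by simp
qed

lemma truth_classes_agree:
  assumes p: "m_nat e p" and q: "m_nat e q" and Cl: "T \<in> Cl" "T' \<in> Cl"
    and T: "truth_class e (DepthF e p) T" and T': "truth_class e (DepthF e q) T'"
    and x: "x \<in> FSent e (DepthF e p)" "x \<in> FSent e (DepthF e q)"
  shows "x \<in> T \<longleftrightarrow> x \<in> T'"
proof -
  let ?A = "{n. m_le e n p \<longrightarrow> (\<forall>x. x \<in> FSent e (DepthF e n) \<and> x \<in> FSent e (DepthF e q)
     \<longrightarrow> (x \<in> T \<longleftrightarrow> x \<in> T'))}"
  have "?A \<in> Cl"
    by (rule definable_class3)
      (intro definable_logic definable_m_le definable_FSent_DepthF Cl)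
  then have "p \<in> ?A" using p
  proof (rule nat_class_induct)
    fix n assume n: "m_nat e n" and IH: "\<forall>n'. e n' n \<longrightarrow> n' \<in> ?A"
    show "n \<in> ?A"
    proof (intro CollectI impI allI, elim conjE)
      fix x assume np: "m_le e n p" and xn: "x \<in> FSent e (DepthF e n)" and xq: "x \<in> FSent e (DepthF e q)"
      have "x \<in> FSent e (DepthF e p)" using xn FSent_mono[OF DepthF_mono[OF p np]] by blast
      then show "x \<in> T \<longleftrightarrow> x \<in> T'"
      proof (rule truth_classes_agree_step[OF T T' _ xq])
        fix y assume y: "immediate_subsentence y x" "LPclosed e y"
        obtain n' where "e n' n" "y \<in> FSent e (DepthF e n')"
          using FSent_DepthF_subsentence[OF n xn y] by blast
        moreover have "m_le e n' p" using mem_le_nat[OF p np \<open>e n' n\<close>] unfolding m_le_def by blast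
        moreover have "y \<in> FSent e (DepthF e q)" using FSent_DepthF_subsentence_closed[OF q xq y] .
        ultimately show "y \<in> T \<longleftrightarrow> y \<in> T'" using IH by blast
      qed
    qed
  qed
  then show ?thesis using x unfolding m_le_def by blast
qed

lemma truth_class_restrict:
  assumes T: "truth_class e F T" and sub: "FSent e F' \<subseteq> FSent e F"
    and atoms: "\<And>p ta tb a b. isConst e ta a \<Longrightarrow> isConst e tb b \<Longrightarrow>
      isEqF e p ta tb \<or> isMemF e p ta tb \<Longrightarrow> p \<in> FSent e F'"
    and closed: "\<And>x y. x \<in> FSent e F' \<Longrightarrow> immediate_subsentence y x \<Longrightarrow> LPclosed e y \<Longrightarrow>
      y \<in> FSent e F'"
  shows "truth_class e F' (T \<inter> FSent e F')"
proof -
  have connective: "\<psi> \<in> FSent e F'"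
    if x: "x \<in> FSent e F'" and \<psi>: "isNeg e x \<psi> \<or> (\<exists>\<psi>'. isOr e x \<psi> \<psi>' \<or> isOr e x \<psi>' \<psi>)" for x \<psi>
  proof -
    have "LPclosed e \<psi>" using \<psi> LPclosed_neg LPclosed_or FSent_LPclosed[OF x] by blast
    then show ?thesis using closed[OF x] \<psi> unfolding immediate_subsentence_def by blast
  qed
  have witness: "y \<in> FSent e F'"
    if "x \<in> FSent e F'" "isEx e x i \<psi>" "isSingAssign e h i a" "ssubst e h \<psi> y" "y \<in> T" for x i \<psi> h a y
    using closed[OF that(1)] FSent_LPclosed[OF truth_class_FSent[OF T that(5)]] that(2-4)
    unfolding immediate_subsentence_def by blast
  show ?thesis unfolding truth_class_def
  proof (intro conjI allI impI)
    fix a b p ta tb assume "isConst e ta a \<and> isConst e tb b \<and> isEqF e p ta tb"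
    then show "p \<in> T \<inter> FSent e F' \<longleftrightarrow> a = b" using atoms truth_class_eq[OF T] by blast
  next
    fix a b p ta tb assume "isConst e ta a \<and> isConst e tb b \<and> isMemF e p ta tb"
    then show "p \<in> T \<inter> FSent e F' \<longleftrightarrow> e a b" using atoms truth_class_mem[OF T] by blast
  next
    fix x \<psi> assume x: "x \<in> FSent e F' \<and> isNeg e x \<psi>"
    then show "x \<in> T \<inter> FSent e F' \<longleftrightarrow> \<psi> \<notin> T \<inter> FSent e F'"
      using connective sub truth_class_neg[OF T] by blast
  next
    fix x \<psi>1 \<psi>2 assume x: "x \<in> FSent e F' \<and> isOr e x \<psi>1 \<psi>2"
    then have "\<psi>1 \<in> FSent e F'" "\<psi>2 \<in> FSent e F'" "x \<in> T \<longleftrightarrow> \<psi>1 \<in> T \<or> \<psi>2 \<in> T"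
      using connective sub truth_class_or[OF T] by blast+
    then show "x \<in> T \<inter> FSent e F' \<longleftrightarrow> \<psi>1 \<in> T \<inter> FSent e F' \<or> \<psi>2 \<in> T \<inter> FSent e F'"
      using x by simp
  next
    fix x i \<psi> assume x: "x \<in> FSent e F' \<and> isEx e x i \<psi>"
    then have "x \<in> T \<longleftrightarrow> (\<exists>a g y. isSingAssign e g i a \<and> ssubst e g \<psi> y \<and> y \<in> T)"
      using sub truth_class_ex[OF T] by blast
    then show "x \<in> T \<inter> FSent e F' \<longleftrightarrow>
        (\<exists>a g y. isSingAssign e g i a \<and> ssubst e g \<psi> y \<and> y \<in> T \<inter> FSent e F')"
      using x witness by blast
  qed simp
qed

lemma truth_class_DepthF_restrict:
  assumes p: "m_nat e p" and "T \<in> Cl" and T: "truth_class e (DepthF e p) T" and dp: "m_le e d p"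
  shows "\<exists>T'\<in>Cl. truth_class e (DepthF e d) T'"
proof -
  have d: "m_nat e d" using le_nat[OF p dp] .
  have "T \<inter> FSent e (DepthF e d) \<in> Cl"
    using definable_class2[of "\<lambda>x d. x \<in> T \<and> x \<in> FSent e (DepthF e d)" d]
    by (simp add: Int_def definable_logic definable_FSent_DepthF \<open>T \<in> Cl\<close>)
  moreover have "truth_class e (DepthF e d) (T \<inter> FSent e (DepthF e d))"
    using truth_class_restrict[OF T FSent_mono[OF DepthF_mono[OF p dp]]]
      atomic_FSent_DepthF[OF d] FSent_DepthF_subsentence_closed[OF d] by blast
  ultimately show ?thesis by blast
qed

lemma truth_class_depth_zero:
  "\<exists>z T. m_nat e z \<and> T \<in> Cl \<and> truth_class e (DepthF e z) T"
proof -
  obtain z where z: "m_empty e z" using empty_exists by blast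
  then have nz: "m_nat e z" by (rule nat_empty)
  let ?T = "{x. (\<exists>a ta tb. isConst e ta a \<and> isConst e tb a \<and> isEqF e x ta tb) \<or>
     (\<exists>a b ta tb. isConst e ta a \<and> isConst e tb b \<and> isMemF e x ta tb \<and> e a b)}"
  have "?T \<in> Cl" by (rule definable_class1) (intro definable_logic definable_syntax)
  have nonatomic: False if "x \<in> FSent e (DepthF e z)"
    "isNeg e x \<psi> \<or> isOr e x \<psi>1 \<psi>2 \<or> isEx e x i \<psi>" for x \<psi> \<psi>1 \<psi>2 i
    using FSent_DepthF_empty_atomic[OF z that(1)] that(2) syntax_distinct by metis
  have "truth_class e (DepthF e z) ?T" unfolding truth_class_def
  proof (intro conjI allI impI)
    show "?T \<subseteq> FSent e (DepthF e z)" using atomic_FSent_DepthF[OF nz] by blast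
  next
    fix a b p ta tb assume "isConst e ta a \<and> isConst e tb b \<and> isEqF e p ta tb"
    then show "p \<in> ?T \<longleftrightarrow> a = b" using syntax_inject syntax_distinct by (auto; metis)
  next
    fix a b p ta tb assume "isConst e ta a \<and> isConst e tb b \<and> isMemF e p ta tb"
    then show "p \<in> ?T \<longleftrightarrow> e a b" using syntax_inject syntax_distinct by (auto; metis)
  qed (use nonatomic in blast)+
  then show ?thesis using nz \<open>?T \<in> Cl\<close> by blast
qed

subsection \<open>The union of all partial truth classes\<close>

lemma T_Most_iff:
  "T_Most e Cl x \<longleftrightarrow> (\<exists>p T. m_nat e p \<and> T \<in> Cl \<and> truth_class e (DepthF e p) T \<and> x \<in> T)"
proof
  assume "T_Most e Cl x"
  then show "\<exists>p T. m_nat e p \<and> T \<in> Cl \<and> truth_class e (DepthF e p) T \<and> x \<in> T"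
    unfolding T_Most_def by (elim conjE exE) blast
next
  assume "\<exists>p T. m_nat e p \<and> T \<in> Cl \<and> truth_class e (DepthF e p) T \<and> x \<in> T"
  then obtain p T where pT: "m_nat e p" "T \<in> Cl" "truth_class e (DepthF e p) T" "x \<in> T" by blast
  have x: "x \<in> FSent e (DepthF e p)" using truth_class_FSent[OF pT(3,4)] .
  then obtain \<phi> g d where \<phi>: "is_instance \<phi> g x" "hasDepth e \<phi> d" "m_le e d p"
    unfolding FSent_DepthF_iff by blast
  have "DepthF e p \<subseteq> {\<phi>. LZFformula e \<phi>}" unfolding DepthF_def by blast
  then have "x \<in> LPsentence e" unfolding LPsentence_def using FSent_mono x by blast
  then show "T_Most e Cl x"
    unfolding T_Most_def using \<phi> pT unfolding is_instance_def by blast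
qed

lemma T_Most_FSent:
  assumes "T_Most e Cl x"
  shows "x \<in> FSent e (Depth_Most e Cl)"
proof -
  obtain p T where p: "m_nat e p" "T \<in> Cl" and T: "truth_class e (DepthF e p) T" "x \<in> T"
    using assms T_Most_iff by blast
  obtain \<phi> g d where x: "LPclosed e x" "is_instance \<phi> g x" "hasDepth e \<phi> d" "m_le e d p"
    using truth_class_FSent[OF T] unfolding FSent_DepthF_iff by blast
  then have "d \<in> C_Most e Cl"
    using truth_class_DepthF_restrict[OF p T(1)] hasDepth_nat unfolding C_Most_def by blast
  then show ?thesis
    using x unfolding FSent_def Depth_Most_def is_instance_def by blast
qed

lemma FSent_Depth_Most_covered:
  assumes "x \<in> FSent e (Depth_Most e Cl)"
  shows "\<exists>d T. m_nat e d \<and> T \<in> Cl \<and> truth_class e (DepthF e d) T \<and> x \<in> FSent e (DepthF e d)"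
proof -
  obtain \<phi> g d where x: "LPclosed e x" "is_instance \<phi> g x" "hasDepth e \<phi> d" "d \<in> C_Most e Cl"
    using assms unfolding FSent_def Depth_Most_def is_instance_def by blast
  then have "x \<in> FSent e (DepthF e d)" unfolding FSent_DepthF_iff m_le_def by blast
  then show ?thesis using x(4) unfolding C_Most_def by blast
qed

lemma atomic_covered:
  assumes "isConst e ta a" "isConst e tb b" "isEqF e p ta tb \<or> isMemF e p ta tb"
  obtains d T where "m_nat e d" "T \<in> Cl" "truth_class e (DepthF e d) T" "p \<in> FSent e (DepthF e d)"
proof -
  obtain z T where "m_nat e z" "T \<in> Cl" "truth_class e (DepthF e z) T"
    using truth_class_depth_zero by blast
  then show ?thesis using that atomic_FSent_DepthF[OF \<open>m_nat e z\<close> assms(3,1,2)] by blast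
qed

lemma T_Most_local:
  assumes d: "m_nat e d" "T \<in> Cl" "truth_class e (DepthF e d) T" and y: "y \<in> FSent e (DepthF e d)"
  shows "T_Most e Cl y \<longleftrightarrow> y \<in> T"
proof
  assume "T_Most e Cl y"
  then obtain q T' where q: "m_nat e q" "T' \<in> Cl" "truth_class e (DepthF e q) T'" "y \<in> T'"
    using T_Most_iff by blast
  then show "y \<in> T"
    using truth_classes_agree[OF d(1) q(1) d(2) q(2) d(3) q(3) y truth_class_FSent[OF q(3,4)]] by blast
next
  assume "y \<in> T"
  then show "T_Most e Cl y" using T_Most_iff d by blast
qed

lemma T_Most_eq:
  assumes p: "isConst e ta a" "isConst e tb b" "isEqF e p ta tb"
  shows "T_Most e Cl p \<longleftrightarrow> a = b"
proof -
  obtain d T where d: "m_nat e d" "T \<in> Cl" "truth_class e (DepthF e d) T"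
    and "p \<in> FSent e (DepthF e d)" using atomic_covered p by blast
  then show ?thesis using T_Most_local[OF d] truth_class_eq[OF d(3) p] by simp
qed

lemma T_Most_mem:
  assumes p: "isConst e ta a" "isConst e tb b" "isMemF e p ta tb"
  shows "T_Most e Cl p \<longleftrightarrow> e a b"
proof -
  obtain d T where d: "m_nat e d" "T \<in> Cl" "truth_class e (DepthF e d) T"
    and "p \<in> FSent e (DepthF e d)" using atomic_covered p by blast
  then show ?thesis using T_Most_local[OF d] truth_class_mem[OF d(3) p] by simp
qed

lemma T_Most_neg:
  assumes x: "x \<in> FSent e (Depth_Most e Cl)" and \<psi>: "isNeg e x \<psi>"
  shows "T_Most e Cl x \<longleftrightarrow> \<not> T_Most e Cl \<psi>"
proof -
  obtain d T where d: "m_nat e d" "T \<in> Cl" "truth_class e (DepthF e d) T"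
    and xd: "x \<in> FSent e (DepthF e d)" using FSent_Depth_Most_covered[OF x] by blast
  have "immediate_subsentence \<psi> x" using \<psi> unfolding immediate_subsentence_def by blast
  then have "\<psi> \<in> FSent e (DepthF e d)"
    using FSent_DepthF_subsentence_closed[OF d(1) xd] LPclosed_neg[OF FSent_LPclosed[OF xd] \<psi>] by blast
  then show ?thesis using T_Most_local[OF d] xd truth_class_neg[OF d(3) xd \<psi>] by simp
qed

lemma T_Most_or:
  assumes x: "x \<in> FSent e (Depth_Most e Cl)" and \<psi>: "isOr e x \<psi>1 \<psi>2"
  shows "T_Most e Cl x \<longleftrightarrow> T_Most e Cl \<psi>1 \<or> T_Most e Cl \<psi>2"
proof -
  obtain d T where d: "m_nat e d" "T \<in> Cl" "truth_class e (DepthF e d) T"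
    and xd: "x \<in> FSent e (DepthF e d)" using FSent_Depth_Most_covered[OF x] by blast
  have "immediate_subsentence \<psi>1 x" "immediate_subsentence \<psi>2 x"
    using \<psi> unfolding immediate_subsentence_def by blast+
  then have "\<psi>1 \<in> FSent e (DepthF e d)" "\<psi>2 \<in> FSent e (DepthF e d)"
    using FSent_DepthF_subsentence_closed[OF d(1) xd] LPclosed_or[OF FSent_LPclosed[OF xd] \<psi>] by blast+
  then show ?thesis using T_Most_local[OF d] xd truth_class_or[OF d(3) xd \<psi>] by simp
qed

lemma T_Most_ex:
  assumes x: "x \<in> FSent e (Depth_Most e Cl)" and \<psi>: "isEx e x i \<psi>"
  shows "T_Most e Cl x \<longleftrightarrow> (\<exists>a g y. isSingAssign e g i a \<and> ssubst e g \<psi> y \<and> T_Most e Cl y)"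
proof -
  obtain d T where d: "m_nat e d" "T \<in> Cl" "truth_class e (DepthF e d) T"
    and xd: "x \<in> FSent e (DepthF e d)" using FSent_Depth_Most_covered[OF x] by blast
  have witness: "T_Most e Cl y \<longleftrightarrow> y \<in> T"
    if "isSingAssign e h i a" "ssubst e h \<psi> y" "T_Most e Cl y \<or> y \<in> T" for h a y
  proof -
    have "immediate_subsentence y x" using that(1,2) \<psi> unfolding immediate_subsentence_def by blast
    moreover have "LPclosed e y"
      using that(3) FSent_LPclosed[OF T_Most_FSent] FSent_LPclosed[OF truth_class_FSent[OF d(3)]] by blast
    ultimately show ?thesis using T_Most_local[OF d] FSent_DepthF_subsentence_closed[OF d(1) xd] by blast
  qed
  have "T_Most e Cl x \<longleftrightarrow> (\<exists>a g y. isSingAssign e g i a \<and> ssubst e g \<psi> y \<and> y \<in> T)"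
    using T_Most_local[OF d xd] truth_class_ex[OF d(3) xd \<psi>] by simp
  also have "\<dots> \<longleftrightarrow> (\<exists>a g y. isSingAssign e g i a \<and> ssubst e g \<psi> y \<and> T_Most e Cl y)"
    using witness by meson
  finally show ?thesis .
qed

theorem T_Most_truth_class: "truth_class e (Depth_Most e Cl) {x. T_Most e Cl x}"
proof (unfold truth_class_def mem_Collect_eq, intro conjI allI impI)
  show "{x. T_Most e Cl x} \<subseteq> FSent e (Depth_Most e Cl)" using T_Most_FSent by blast
qed (elim conjE; rule T_Most_eq T_Most_mem T_Most_neg T_Most_or T_Most_ex; assumption)+

end

theorem theorem3p4:
  fixes e :: "'a \<Rightarrow> 'a \<Rightarrow> bool" and Cl :: "'a set set"
  assumes "GB_plus_inf e Cl \<or> GB_minus_inf e Cl"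
  shows "truth_class e (Depth_Most e Cl) {x. T_Most e Cl x}"
proof -
  have "GB_common e Cl" using assms unfolding GB_plus_inf_def GB_minus_inf_def by blast
  then interpret gb_model e Cl by unfold_locales
  show ?thesis by (rule T_Most_truth_class)
qed

end
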